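(* Let $\mathcal{P}$ be a partition of $\{1,\dots,n\}$ and $\mathcal{U}$ a subspace of $\mathbb{R}^n$. The following are equivalent: (1) $\mathcal{U}$ is recoverable by BMTFA; (2) $\mathcal{U}$ is $\mathcal{P}$-realizable; (3) $\mathcal{U}^\perp$ has the $\mathcal{P}$-ellipsoid fitting property.
   Context: A matrix is $\mathcal{P}$-block-diagonal if it is zero outside the principal submatrices indexed by the blocks $\mathcal{I}\in\mathcal{P}$. Block minimum trace factor analysis (BMTFA) with input symmetric $X$: minimize $\operatorname{tr}(L)$ subject to $X=B+L$, $L$ positive semidefinite, $B$ $\mathcal{P}$-block-diagonal. $\mathcal{U}$ is recoverable by BMTFA if for every $\mathcal{P}$-block-diagonal $B^\star$ and every positive semidefinite $L^\star$ with column space $\mathcal{U}$, $(B^\star,L^\star)$ is the unique optimum of BMTFA with input $B^\star+L^\star$. The $\mathcal{P}$-elliptope is $\mathcal{E}_{\mathcal{P}}=\{Y\succeq 0: Y_{\mathcal{I}}=I \text{ for all }\mathcal{I}\in\mathcal{P}\}$, where $Y_{\mathcal{I}}$ is the principal submatrix indexed by $\mathcal{I}$. $\mathcal{U}$ is $\mathcal{P}$-realizable if some $Y\in\mathcal{E}_{\mathcal{P}}$ has nullspace containing $\mathcal{U}$. For $\mathcal{I}\subseteq\{1,\dots,n\}$, $S^{\mathcal{I}}=\{x\in\mathbb{R}^n:\|x\|_2=1,\ x_j=0\text{ for }j\notin\mathcal{I}\}$. A centered ellipsoid in $\mathbb{R}^k$ is given by a positive semidefinite $M$, with boundary $\{y: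 y^TMy=1\}$. A subspace $\mathcal{V}$ has the $\mathcal{P}$-ellipsoid fitting property if there is a $k\times n$ matrix $V$ with row space $\mathcal{V}$ and a centered ellipsoid in $\mathbb{R}^k$ whose boundary contains $\bigcup_{\mathcal{I}\in\mathcal{P}}V(S^{\mathcal{I}})$. *)

theory Defs
  imports "Jordan_Normal_Form.Matrix_Kernel" "HOL-Library.Disjoint_Sets"
begin

text \<open>Conventions: R^n is realised as JNF vectors of dimension n, coordinates
indexed by 0..<n (instead of 1..n); matrices are JNF matrices with explicit
dimensions.\<close>

definition mtrace :: "real mat \<Rightarrow> real" where
  "mtrace A = (\<Sum>i\<in>{0..<dim_row A}. A $$ (i, i))"

definition psd :: "nat \<Rightarrow> real mat \<Rightarrow> bool" where
  "psd n A \<longleftrightarrow> A \<in> carrier_mat n n \<and> transpose_mat A = A \<and>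
     (\<forall>x \<in> carrier_vec n. x \<bullet> (A *\<^sub>v x) \<ge> 0)"

definition block_diag :: "nat \<Rightarrow> nat set set \<Rightarrow> real mat \<Rightarrow> bool" where
  "block_diag n P B \<longleftrightarrow> B \<in> carrier_mat n n \<and>
     (\<forall>i<n. \<forall>j<n. (\<not> (\<exists>I\<in>P. i \<in> I \<and> j \<in> I)) \<longrightarrow> B $$ (i, j) = 0)"

definition bmtfa_feasible :: "nat \<Rightarrow> nat set set \<Rightarrow> real mat \<Rightarrow> real mat \<Rightarrow> real mat \<Rightarrow> bool" where
  "bmtfa_feasible n P X B L \<longleftrightarrow> X = B + L \<and> psd n L \<and> block_diag n P B"

definition bmtfa_unique_opt :: "nat \<Rightarrow> nat set set \<Rightarrow> real mat \<Rightarrow> real mat \<Rightarrow> real mat \<Rightarrow> bool" where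
  "bmtfa_unique_opt n P X B L \<longleftrightarrow> bmtfa_feasible n P X B L \<and>
     (\<forall>B' L'. bmtfa_feasible n P X B' L' \<longrightarrow> (B', L') \<noteq> (B, L) \<longrightarrow> mtrace L < mtrace L')"

definition col_space :: "nat \<Rightarrow> real mat \<Rightarrow> real vec set" where
  "col_space n L = {L *\<^sub>v x | x. x \<in> carrier_vec n}"

definition row_space :: "nat \<Rightarrow> real mat \<Rightarrow> real vec set" where
  "row_space k V = {transpose_mat V *\<^sub>v y | y. y \<in> carrier_vec k}"

definition is_subspace :: "nat \<Rightarrow> real vec set \<Rightarrow> bool" where
  "is_subspace n U \<longleftrightarrow> U \<subseteq> carrier_vec n \<and> 0\<^sub>v n \<in> U \<and>
     (\<forall>u\<in>U. \<forall>v\<in>U. u + v \<in> U) \<and> (\<forall>c. \<forall>u\<in>U. c \<cdot>\<^sub>v u \<in> U)"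

definition orth_compl :: "nat \<Rightarrow> real vec set \<Rightarrow> real vec set" where
  "orth_compl n U = {x \<in> carrier_vec n. \<forall>u\<in>U. x \<bullet> u = 0}"

definition recoverable :: "nat \<Rightarrow> nat set set \<Rightarrow> real vec set \<Rightarrow> bool" where
  "recoverable n P U \<longleftrightarrow>
     (\<forall>B L. block_diag n P B \<longrightarrow> transpose_mat B = B \<longrightarrow> psd n L \<longrightarrow> col_space n L = U \<longrightarrow>
        bmtfa_unique_opt n P (B + L) B L)"

definition elliptope :: "nat \<Rightarrow> nat set set \<Rightarrow> real mat set" where
  "elliptope n P = {Y. psd n Y \<and>
     (\<forall>I\<in>P. \<forall>i\<in>I. \<forall>j\<in>I. Y $$ (i, j) = (if i = j then 1 else 0))}"

definition realizable :: "nat \<Rightarrow> nat set set \<Rightarrow> real vec set \<Rightarrow> bool" where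
  "realizable n P U \<longleftrightarrow> (\<exists>Y \<in> elliptope n P. U \<subseteq> mat_kernel Y)"

definition sphere_on :: "nat \<Rightarrow> nat set \<Rightarrow> real vec set" where
  "sphere_on n I = {x \<in> carrier_vec n. x \<bullet> x = 1 \<and> (\<forall>j<n. j \<notin> I \<longrightarrow> x $ j = 0)}"

text \<open>V is k x n, its row space is W, and the centered ellipsoid y^T M y = 1
(M psd, k x k) contains V(S^I) for all blocks I.\<close>
definition ellipsoid_fitting :: "nat \<Rightarrow> nat set set \<Rightarrow> real vec set \<Rightarrow> bool" where
  "ellipsoid_fitting n P W \<longleftrightarrow>
     (\<exists>k V M. V \<in> carrier_mat k n \<and> row_space k V = W \<and> psd k M \<and>
        (\<forall>I\<in>P. \<forall>x\<in>sphere_on n I. (V *\<^sub>v x) \<bullet> (M *\<^sub>v (V *\<^sub>v x)) = 1))"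

end

theory Submission
  imports Defs "HOL-Analysis.Function_Topology"
begin

text \<open>
  Realizable implies recoverable: a point Y of the elliptope with U in its kernel is a dual
  certificate. For a competitor (B', L') the difference L' - L = B - B' is block diagonal, and Y
  is the identity on the blocks, so tr L' - tr L = <Y, L' - L> = <Y, L'> >= 0; equality forces
  L' Y = 0, hence (L' - L) Y = 0, which for a block diagonal matrix means L' = L.

  Recoverable implies realizable, by contraposition: minimise the squared distance to the identity
  on the blocks over the compact convex set of trace-bounded psd matrices annihilating U. If the
  minimum is 0 the minimiser lies in the elliptope. Otherwise the first-order conditions make the
  gradient R at the minimiser block diagonal with negative trace and positive semidefinite on the
  orthogonal complement of U; then D = R + e I is positive definite there for small e > 0, so
  c P + D is psd for the projection P onto U and large c, and (-D, c P + D) is a feasible point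
  for the input c P with smaller trace than (0, c P).

  Realizable iff ellipsoid fitting: the matrix V = I - P has row space the orthogonal complement
  of U, every Y with U in its kernel is V^T Y V, and Y lies in the elliptope exactly when its
  quadratic form is 1 on every block sphere.
\<close>

section \<open>Quadratic forms and positive semidefiniteness\<close>

lemma quadratic_nonneg_imp_linear_coeff_nonneg:
  fixes a b \<delta> :: real
  assumes "\<And>t. 0 < t \<Longrightarrow> t \<le> \<delta> \<Longrightarrow> 0 \<le> 2 * t * a + t * t * b" and "0 < \<delta>"
  shows "0 \<le> a"
proof (rule ccontr)
  assume "\<not> 0 \<le> a"
  define t where "t = min \<delta> (- a / (\<bar>b\<bar> + 1))"
  have t: "0 < t" "t \<le> \<delta>" using \<open>\<not> 0 \<le> a\<close> assms(2) by (auto simp: t_def divide_neg_pos add_pos_nonneg)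
  have "t * \<bar>b\<bar> \<le> - a / (\<bar>b\<bar> + 1) * \<bar>b\<bar>"
    by (intro mult_right_mono) (auto simp: t_def)
  also have "\<dots> < - a" using \<open>\<not> 0 \<le> a\<close> by (simp add: field_simps)
  finally have "t * \<bar>b\<bar> < - a" .
  moreover have "t * b \<le> t * \<bar>b\<bar>" using t(1) by (simp add: mult_left_mono)
  ultimately have "2 * a + t * b < 0" using \<open>\<not> 0 \<le> a\<close> by linarith
  then have "t * (2 * a + t * b) < 0" using t(1) by (simp add: mult_pos_neg)
  then show False using assms(1)[OF t] by (simp add: algebra_simps)
qed

lemma completing_square_nonneg:
  fixes S a b \<epsilon> :: real
  assumes "0 < \<epsilon>"
  shows "0 \<le> S\<^sup>2 / \<epsilon> * a\<^sup>2 - 2 * S * a * b + \<epsilon> * b\<^sup>2"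
proof -
  have "S\<^sup>2 / \<epsilon> * a\<^sup>2 - 2 * S * a * b + \<epsilon> * b\<^sup>2 = (S * a - \<epsilon> * b)\<^sup>2 / \<epsilon>"
    using assms by (simp add: power2_eq_square field_simps)
  then show ?thesis using assms by simp
qed

(* Matrices as coefficient functions: this suits the inductive Gram factorisation below and the
   product topology on nat \<times> nat \<Rightarrow> real used in the compactness argument. *)
definition quad_form :: "nat \<Rightarrow> (nat \<Rightarrow> nat \<Rightarrow> real) \<Rightarrow> (nat \<Rightarrow> real) \<Rightarrow> real" where
  "quad_form m a x = (\<Sum>i<m. \<Sum>j<m. x i * a i j * x j)"

definition psd_fun :: "nat \<Rightarrow> (nat \<Rightarrow> nat \<Rightarrow> real) \<Rightarrow> bool" where
  "psd_fun m a \<longleftrightarrow> (\<forall>i<m. \<forall>j<m. a i j = a j i) \<and> (\<forall>x. 0 \<le> quad_form m a x)"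

lemma quad_form_cong: "(\<And>k. k < m \<Longrightarrow> x k = y k) \<Longrightarrow> quad_form m a x = quad_form m a y"
  unfolding quad_form_def by (intro sum.cong refl) auto

lemma quad_form_Suc:
  "quad_form (Suc m) a x = quad_form m a x + x m * (\<Sum>j<m. a m j * x j)
     + (\<Sum>i<m. x i * a i m) * x m + x m * a m m * x m"
  unfolding quad_form_def by (simp add: sum.distrib sum_distrib_left sum_distrib_right algebra_simps)

lemma quad_form_linear:
  "quad_form m (\<lambda>i j. \<alpha> * a i j + \<beta> * b i j) x = \<alpha> * quad_form m a x + \<beta> * quad_form m b x"
  unfolding quad_form_def by (simp add: algebra_simps sum.distrib sum_distrib_left)

lemma quad_form_add_scaled:
  "quad_form m a (\<lambda>k. x k + t * y k) = quad_form m a x + t * (\<Sum>i<m. \<Sum>j<m. y i * a i j * x j)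
     + t * (\<Sum>i<m. \<Sum>j<m. x i * a i j * y j) + t * t * quad_form m a y"
  unfolding quad_form_def by (simp add: algebra_simps sum.distrib sum_distrib_left)

lemma quad_form_support:
  assumes "S \<subseteq> {..<m}" and "\<And>k. k < m \<Longrightarrow> k \<notin> S \<Longrightarrow> x k = 0"
  shows "quad_form m a x = (\<Sum>i\<in>S. \<Sum>j\<in>S. x i * a i j * x j)"
proof -
  have "quad_form m a x = (\<Sum>i\<in>S. \<Sum>j<m. x i * a i j * x j)"
    unfolding quad_form_def using assms by (intro sum.mono_neutral_right) auto
  also have "\<dots> = (\<Sum>i\<in>S. \<Sum>j\<in>S. x i * a i j * x j)"
    using assms by (intro sum.cong refl sum.mono_neutral_right) auto
  finally show ?thesis .
qed

lemma quad_form_single: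
  assumes "i < m"
  shows "quad_form m a (\<lambda>k. if k = i then \<alpha> else 0) = \<alpha> * \<alpha> * a i i"
  using assms by (subst quad_form_support[of "{i}"]) auto

lemma quad_form_pair:
  assumes "i < m" "j < m" "i \<noteq> j"
  shows "quad_form m a (\<lambda>k. if k = i then \<alpha> else if k = j then \<beta> else 0)
     = \<alpha> * \<alpha> * a i i + \<alpha> * \<beta> * a i j + \<beta> * \<alpha> * a j i + \<beta> * \<beta> * a j j"
  using assms by (subst quad_form_support[of "{i, j}"]) auto

lemma psd_fun_diag_nonneg: "psd_fun m a \<Longrightarrow> i < m \<Longrightarrow> 0 \<le> a i i"
  using quad_form_single[of i m a 1] unfolding psd_fun_def by (metis mult_1)

lemma psd_fun_abs_le:
  assumes "psd_fun m a" "i < m" "j < m"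
  shows "2 * \<bar>a i j\<bar> \<le> a i i + a j j"
proof (cases "i = j")
  case True
  then show ?thesis using psd_fun_diag_nonneg[OF assms(1,2)] by simp
next
  case False
  have "a j i = a i j" using assms unfolding psd_fun_def by auto
  moreover have "0 \<le> quad_form m a (\<lambda>k. if k = i then 1 else if k = j then 1 else 0)"
    "0 \<le> quad_form m a (\<lambda>k. if k = i then 1 else if k = j then -1 else 0)"
    using assms unfolding psd_fun_def by auto
  ultimately show ?thesis unfolding quad_form_pair[OF assms(2,3) False] by auto
qed

lemma psd_fun_null:
  assumes "psd_fun m a" "quad_form m a x = 0" "i < m"
  shows "(\<Sum>j<m. a i j * x j) = 0"
proof -
  define v where "v k = (\<Sum>j<m. a k j * x j)" for k
  define N where "N = (\<Sum>k<m. v k * v k)"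
  have sym: "a k l = a l k" if "k < m" "l < m" for k l using assms(1) that unfolding psd_fun_def by auto
  have cross1: "(\<Sum>k<m. \<Sum>l<m. v k * a k l * x l) = N"
    unfolding N_def by (simp add: v_def sum_distrib_left algebra_simps)
  have "(\<Sum>k<m. \<Sum>l<m. x k * a k l * v l) = (\<Sum>l<m. v l * (\<Sum>k<m. a l k * x k))"
    by (subst sum.swap) (auto simp: sum_distrib_left sym algebra_simps intro!: sum.cong)
  then have cross2: "(\<Sum>k<m. \<Sum>l<m. x k * a k l * v l) = N" unfolding N_def v_def by simp
  have "0 \<le> - N"
  proof (rule quadratic_nonneg_imp_linear_coeff_nonneg[where \<delta> = 1])
    fix t :: real
    have "0 \<le> quad_form m a (\<lambda>k. x k + (- t) * v k)" using assms(1) unfolding psd_fun_def by auto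
    then show "0 \<le> 2 * t * - N + t * t * quad_form m a v"
      unfolding quad_form_add_scaled cross1 cross2 assms(2) by (simp add: algebra_simps)
  qed simp
  moreover have "0 \<le> N" unfolding N_def by (intro sum_nonneg) auto
  ultimately have "N = 0" by simp
  then have "\<forall>k\<in>{..<m}. v k * v k = 0" unfolding N_def by (subst sum_nonneg_eq_0_iff[symmetric]) auto
  then show ?thesis using assms(3) unfolding v_def by auto
qed

lemma psd_fun_zero_diag:
  assumes "psd_fun m a" "i < m" "j < m" "a j j = 0"
  shows "a i j = 0"
proof -
  have "quad_form m a (\<lambda>k. if k = j then 1 else 0) = 0"
    using quad_form_single[OF assms(3)] assms(4) by simp
  from psd_fun_null[OF assms(1) this assms(2)] show ?thesis
    using assms(3) by (simp add: if_distrib cong: if_cong)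
qed

(* If a m m = 0, column m vanishes (psd_fun_zero_diag) and x / 0 = 0 leaves a unchanged. *)
lemma psd_fun_schur_complement:
  assumes "psd_fun (Suc m) a"
  shows "psd_fun m (\<lambda>i j. a i j - a i m * a j m / a m m)"
  unfolding psd_fun_def
proof (intro conjI allI impI)
  have sym: "a i j = a j i" if "i < Suc m" "j < Suc m" for i j
    using assms that unfolding psd_fun_def by auto
  then show "a i j - a i m * a j m / a m m = a j i - a j m * a i m / a m m" if "i < m" "j < m" for i j
    using that by simp
  have p0: "0 \<le> a m m" using psd_fun_diag_nonneg[OF assms] by simp
  fix x
  define s where "s = (\<Sum>i<m. x i * a i m)"
  define z where "z k = (if k = m then - s / a m m else x k)" for k
  have "0 \<le> quad_form (Suc m) a z" using assms unfolding psd_fun_def by auto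
  also have "quad_form (Suc m) a z = quad_form m a x - s * s / a m m"
  proof -
    have "quad_form m a z = quad_form m a x" by (rule quad_form_cong) (simp add: z_def)
    moreover have "(\<Sum>j<m. a m j * z j) = s" "(\<Sum>i<m. z i * a i m) = s"
      unfolding s_def z_def by (auto simp: sym mult.commute intro!: sum.cong)
    ultimately show ?thesis
      unfolding quad_form_Suc using p0 by (cases "a m m = 0") (auto simp: z_def field_simps)
  qed
  also have "s * s / a m m = (\<Sum>i<m. \<Sum>j<m. x i * (a i m * a j m / a m m) * x j)"
    unfolding s_def sum_product sum_divide_distrib by (intro sum.cong refl) (simp add: algebra_simps)
  finally show "0 \<le> quad_form m (\<lambda>i j. a i j - a i m * a j m / a m m) x"
    unfolding quad_form_def by (simp add: algebra_simps sum_subtractf)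
qed

lemma psd_fun_gram:
  "psd_fun m a \<Longrightarrow> \<exists>y. \<forall>i<m. \<forall>j<m. a i j = (\<Sum>k<m. y k i * y k j)"
proof (induction m arbitrary: a)
  case 0
  then show ?case by auto
next
  case (Suc m)
  have sym: "a i j = a j i" if "i < Suc m" "j < Suc m" for i j
    using Suc.prems that unfolding psd_fun_def by auto
  define p where "p = a m m"
  have p0: "0 \<le> p" unfolding p_def using psd_fun_diag_nonneg[OF Suc.prems] by auto
  obtain y' where y': "\<And>i j. i < m \<Longrightarrow> j < m \<Longrightarrow> a i j - a i m * a j m / p = (\<Sum>k<m. y' k i * y' k j)"
    using Suc.IH[OF psd_fun_schur_complement[OF Suc.prems]] unfolding p_def by blast
  define y where "y k i = (if k < m then (if i < m then y' k i else 0) else a i m / sqrt p)" for k i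
  have last_row: "a i m * a j m / p = a i j" if "i < Suc m" "j < Suc m" "\<not> (i < m \<and> j < m)" for i j
  proof (cases "p = 0")
    case True
    then have "a k m = 0" if "k < Suc m" for k
      using psd_fun_zero_diag[OF Suc.prems that, of m] unfolding p_def by simp
    then show ?thesis using that sym[of i j] by (auto simp: less_Suc_eq)
  next
    case False
    then show ?thesis using that sym[of i m] sym[of m j] by (auto simp: p_def less_Suc_eq)
  qed
  show ?case
  proof (intro exI allI impI)
    fix i j assume ij: "i < Suc m" "j < Suc m"
    have "(\<Sum>k<Suc m. y k i * y k j) = (\<Sum>k<m. y k i * y k j) + a i m * a j m / p"
      unfolding y_def using p0 by simp
    also have "\<dots> = a i j"
      using y'[of i j, symmetric] last_row[OF ij] by (cases "i < m \<and> j < m") (auto simp: y_def)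
    finally show "a i j = (\<Sum>k<Suc m. y k i * y k j)" by simp
  qed
qed

lemma scalar_prod_eq_sum: "w \<in> carrier_vec n \<Longrightarrow> (v :: real vec) \<bullet> w = (\<Sum>i<n. v $ i * w $ i)"
  unfolding scalar_prod_def by (simp add: atLeast0LessThan)

lemma scalar_prod_self_nonneg: "(u :: real vec) \<in> carrier_vec n \<Longrightarrow> 0 \<le> u \<bullet> u"
  by (simp add: scalar_prod_eq_sum[of _ n] sum_nonneg)

lemma scalar_prod_self_eq_0:
  assumes "(x :: real vec) \<in> carrier_vec n" "x \<bullet> x = 0"
  shows "x = 0\<^sub>v n"
proof -
  have "(\<Sum>i<n. x $ i * x $ i) = 0" using assms scalar_prod_eq_sum by metis
  then have "\<forall>i\<in>{..<n}. x $ i * x $ i = 0" by (subst sum_nonneg_eq_0_iff[symmetric]) auto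
  then show ?thesis using assms(1) by (intro eq_vecI) auto
qed

lemma abs_entry_le_norm:
  fixes u :: "real vec"
  assumes "u \<in> carrier_vec n" "i < n"
  shows "\<bar>u $ i\<bar> \<le> sqrt (u \<bullet> u)"
proof -
  have "u $ i * u $ i \<le> (\<Sum>k<n. u $ k * u $ k)" using assms(2) by (intro member_le_sum) auto
  then have "sqrt (u $ i * u $ i) \<le> sqrt (\<Sum>k<n. u $ k * u $ k)" by (rule real_sqrt_le_mono)
  then show ?thesis using assms(1) by (simp add: scalar_prod_eq_sum[of _ n])
qed

lemma mult_mat_vec_index:
  "(A :: real mat) \<in> carrier_mat r c \<Longrightarrow> i < r \<Longrightarrow> x \<in> carrier_vec c \<Longrightarrow>
    (A *\<^sub>v x) $ i = (\<Sum>j<c. A $$ (i, j) * x $ j)"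
  by (simp add: scalar_prod_eq_sum[of x c] row_def)

lemma mult_mat_index_sum:
  "(A :: real mat) \<in> carrier_mat r m \<Longrightarrow> B \<in> carrier_mat m c \<Longrightarrow> i < r \<Longrightarrow> j < c \<Longrightarrow>
    (A * B) $$ (i, j) = (\<Sum>k<m. A $$ (i, k) * B $$ (k, j))"
  by (simp add: scalar_prod_eq_sum[of _ m])

lemma mult_mat_zero_vec: "(A :: real mat) \<in> carrier_mat r c \<Longrightarrow> A *\<^sub>v 0\<^sub>v c = 0\<^sub>v r"
  by (intro eq_vecI) (auto simp: scalar_prod_eq_sum[of _ c])

lemma smult_mat_mult_mat_vec:
  "(A :: real mat) \<in> carrier_mat n n \<Longrightarrow> x \<in> carrier_vec n \<Longrightarrow> (c \<cdot>\<^sub>m A) *\<^sub>v x = c \<cdot>\<^sub>v (A *\<^sub>v x)"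
  by (intro eq_vecI) auto

lemma mtrace_minus:
  "A \<in> carrier_mat n n \<Longrightarrow> B \<in> carrier_mat n n \<Longrightarrow> mtrace (A - B) = mtrace A - mtrace B"
  unfolding mtrace_def by (simp add: sum_subtractf)

lemma symmetric_mat_entry:
  assumes "transpose_mat A = A" "A \<in> carrier_mat n n" "i < n" "j < n"
  shows "A $$ (i, j) = A $$ (j, i)"
proof -
  have "transpose_mat A $$ (i, j) = A $$ (j, i)" using assms(2-4) by simp
  then show ?thesis using assms(1) by simp
qed

lemma scalar_prod_mult_mat_vec_eq_quad_form:
  assumes "(A :: real mat) \<in> carrier_mat n n" "x \<in> carrier_vec n"
  shows "x \<bullet> (A *\<^sub>v x) = quad_form n (\<lambda>i j. A $$ (i, j)) (\<lambda>i. x $ i)"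
  using assms unfolding quad_form_def
  by (simp add: scalar_prod_eq_sum[of _ n] mult_mat_vec_index sum_distrib_left algebra_simps)

lemma abs_scalar_prod_mult_mat_vec_le:
  assumes D: "(D :: real mat) \<in> carrier_mat n n" and u: "u \<in> carrier_vec n" and v: "v \<in> carrier_vec n"
  shows "\<bar>u \<bullet> (D *\<^sub>v v)\<bar> \<le> (\<Sum>i<n. \<Sum>j<n. \<bar>D $$ (i, j)\<bar>) * sqrt (u \<bullet> u) * sqrt (v \<bullet> v)"
proof -
  have "u \<bullet> (D *\<^sub>v v) = (\<Sum>i<n. \<Sum>j<n. u $ i * D $$ (i, j) * v $ j)"
    using D u v by (simp add: scalar_prod_eq_sum[of _ n] mult_mat_vec_index sum_distrib_left mult.assoc)
  also have "\<bar>\<dots>\<bar> \<le> (\<Sum>i<n. \<Sum>j<n. \<bar>D $$ (i, j)\<bar> * (sqrt (u \<bullet> u) * sqrt (v \<bullet> v)))"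
  proof (intro order.trans[OF sum_abs] sum_mono order.trans[OF sum_abs])
    fix i j assume "i \<in> {..<n}" "j \<in> {..<n}"
    then have "\<bar>u $ i\<bar> * \<bar>v $ j\<bar> \<le> sqrt (u \<bullet> u) * sqrt (v \<bullet> v)"
      using abs_entry_le_norm scalar_prod_self_nonneg u v by (intro mult_mono) auto
    then have "\<bar>D $$ (i, j)\<bar> * (\<bar>u $ i\<bar> * \<bar>v $ j\<bar>) \<le> \<bar>D $$ (i, j)\<bar> * (sqrt (u \<bullet> u) * sqrt (v \<bullet> v))"
      by (rule mult_left_mono) simp
    then show "\<bar>u $ i * D $$ (i, j) * v $ j\<bar> \<le> \<bar>D $$ (i, j)\<bar> * (sqrt (u \<bullet> u) * sqrt (v \<bullet> v))"
      by (simp add: abs_mult mult_ac)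
  qed
  finally show ?thesis by (simp add: sum_distrib_right mult.assoc)
qed

lemma scalar_prod_mult_mat_vec_add_ge:
  assumes D: "(D :: real mat) \<in> carrier_mat n n" and u: "u \<in> carrier_vec n" and w: "w \<in> carrier_vec n"
    and S: "S = (\<Sum>i<n. \<Sum>j<n. \<bar>D $$ (i, j)\<bar>)" and coercive: "\<epsilon> * (w \<bullet> w) \<le> w \<bullet> (D *\<^sub>v w)"
  shows "\<epsilon> * (w \<bullet> w) - S * (u \<bullet> u) - 2 * S * sqrt (u \<bullet> u) * sqrt (w \<bullet> w) \<le> (u + w) \<bullet> (D *\<^sub>v (u + w))"
proof -
  define a b where "a = sqrt (u \<bullet> u)" and "b = sqrt (w \<bullet> w)"
  have "S * a * a = S * (u \<bullet> u)" unfolding a_def using scalar_prod_self_nonneg[OF u] by simp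
  moreover have "\<bar>u \<bullet> (D *\<^sub>v u)\<bar> \<le> S * a * a" "\<bar>u \<bullet> (D *\<^sub>v w)\<bar> \<le> S * a * b"
    "\<bar>w \<bullet> (D *\<^sub>v u)\<bar> \<le> S * b * a"
    unfolding S a_def b_def using abs_scalar_prod_mult_mat_vec_le[OF D] u w by auto
  moreover have "S * b * a = S * a * b" by simp
  moreover have "(u + w) \<bullet> (D *\<^sub>v (u + w))
      = u \<bullet> (D *\<^sub>v u) + u \<bullet> (D *\<^sub>v w) + w \<bullet> (D *\<^sub>v u) + w \<bullet> (D *\<^sub>v w)"
    using D u w by (simp add: mult_add_distrib_mat_vec[of _ n n] add_scalar_prod_distrib[of _ n]
        scalar_prod_add_distrib[of _ n])
  ultimately have "\<epsilon> * (w \<bullet> w) - S * (u \<bullet> u) - 2 * S * a * b \<le> (u + w) \<bullet> (D *\<^sub>v (u + w))"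
    using coercive unfolding abs_le_iff by linarith
  then show ?thesis unfolding a_def b_def .
qed

lemma psd_entry_sym: "psd n A \<Longrightarrow> i < n \<Longrightarrow> j < n \<Longrightarrow> A $$ (i, j) = A $$ (j, i)"
  unfolding psd_def using symmetric_mat_entry by blast

lemma psd_imp_psd_fun:
  assumes "psd n A"
  shows "psd_fun n (\<lambda>i j. A $$ (i, j))"
  unfolding psd_fun_def
proof (intro conjI allI impI)
  show "A $$ (i, j) = A $$ (j, i)" if "i < n" "j < n" for i j using psd_entry_sym assms that by auto
  fix x :: "nat \<Rightarrow> real"
  have "0 \<le> vec n x \<bullet> (A *\<^sub>v vec n x)" using assms unfolding psd_def by auto
  also have "\<dots> = quad_form n (\<lambda>i j. A $$ (i, j)) x"
    using assms unfolding psd_def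
    by (subst scalar_prod_mult_mat_vec_eq_quad_form[of _ n]) (auto intro: quad_form_cong)
  finally show "0 \<le> quad_form n (\<lambda>i j. A $$ (i, j)) x" .
qed

lemma psd_fun_imp_psd:
  assumes "A \<in> carrier_mat n n" "psd_fun n (\<lambda>i j. A $$ (i, j))"
  shows "psd n A"
  unfolding psd_def
proof (intro conjI ballI)
  show "transpose_mat A = A" using assms unfolding psd_fun_def by (intro eq_matI) auto
  show "0 \<le> x \<bullet> (A *\<^sub>v x)" if "x \<in> carrier_vec n" for x
    using assms that unfolding psd_fun_def by (simp add: scalar_prod_mult_mat_vec_eq_quad_form)
qed (fact assms(1))

lemma psd_congruence:
  assumes M: "psd k M" and V: "V \<in> carrier_mat k n"
  shows "psd n (transpose_mat V * M * V)"
    and "x \<in> carrier_vec n \<Longrightarrow> x \<bullet> (transpose_mat V * M * V *\<^sub>v x) = (V *\<^sub>v x) \<bullet> (M *\<^sub>v (V *\<^sub>v x))"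
proof -
  have MC: "M \<in> carrier_mat k k" and MT: "transpose_mat M = M" using M unfolding psd_def by auto
  show quad: "x \<bullet> (transpose_mat V * M * V *\<^sub>v x) = (V *\<^sub>v x) \<bullet> (M *\<^sub>v (V *\<^sub>v x))"
    if x: "x \<in> carrier_vec n" for x
  proof -
    have "x \<bullet> (transpose_mat V * M * V *\<^sub>v x) = x \<bullet> (transpose_mat V *\<^sub>v (M *\<^sub>v (V *\<^sub>v x)))"
      using MC V x by (simp add: assoc_mult_mat_vec[of _ n k _ n] assoc_mult_mat_vec[of _ n k _ k])
    also have "\<dots> = (transpose_mat V *\<^sub>v (M *\<^sub>v (V *\<^sub>v x))) \<bullet> x"
      by (rule comm_scalar_prod[OF x]) (use MC V x in simp)
    also have "\<dots> = (M *\<^sub>v (V *\<^sub>v x)) \<bullet> (V *\<^sub>v x)"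
      by (rule transpose_vec_mult_scalar[OF V x]) (use MC V x in simp)
    also have "\<dots> = (V *\<^sub>v x) \<bullet> (M *\<^sub>v (V *\<^sub>v x))"
      by (rule comm_scalar_prod[of _ k]) (use MC V x in simp_all)
    finally show ?thesis .
  qed
  have "transpose_mat (transpose_mat V * M * V) = transpose_mat V * transpose_mat (transpose_mat V * M)"
    by (rule transpose_mult[of _ n k]) (use MC V in simp_all)
  also have "transpose_mat (transpose_mat V * M) = M * V"
    using MC MT V by (subst transpose_mult[of _ n k _ k]) simp_all
  also have "transpose_mat V * (M * V) = transpose_mat V * M * V"
    using MC V by (simp add: assoc_mult_mat[of _ n k _ k _ n])
  finally have "transpose_mat (transpose_mat V * M * V) = transpose_mat V * M * V" .
  then show "psd n (transpose_mat V * M * V)"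
    using M MC V quad unfolding psd_def by simp
qed

lemma scalar_prod_mult_mat_vec_minus_kernel:
  assumes "(Y :: real mat) \<in> carrier_mat n n" "transpose_mat Y = Y"
    and "x \<in> carrier_vec n" "u \<in> carrier_vec n" "Y *\<^sub>v u = 0\<^sub>v n"
  shows "(x - u) \<bullet> (Y *\<^sub>v (x - u)) = x \<bullet> (Y *\<^sub>v x)"
proof -
  have "Y *\<^sub>v (x - u) = Y *\<^sub>v x" using assms by (simp add: mult_minus_distrib_mat_vec)
  moreover have "u \<bullet> (Y *\<^sub>v x) = 0"
    using transpose_vec_mult_scalar[OF assms(1,3,4)] assms(2,3,5) by simp
  ultimately show ?thesis using assms by (simp add: minus_scalar_prod_distrib[of _ n])
qed

definition frobenius_inner :: "nat \<Rightarrow> real mat \<Rightarrow> real mat \<Rightarrow> real" where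
  "frobenius_inner n A B = (\<Sum>i<n. \<Sum>j<n. A $$ (i, j) * B $$ (i, j))"

lemma frobenius_inner_minus:
  "B \<in> carrier_mat n n \<Longrightarrow> frobenius_inner n Y (A - B) = frobenius_inner n Y A - frobenius_inner n Y B"
  unfolding frobenius_inner_def by (simp add: sum_subtractf algebra_simps)

lemma frobenius_inner_gram:
  assumes "\<And>i j. i < n \<Longrightarrow> j < n \<Longrightarrow> Y $$ (i, j) = (\<Sum>k<n. y k i * y k j)"
  shows "frobenius_inner n Y L = (\<Sum>k<n. quad_form n (\<lambda>i j. L $$ (i, j)) (y k))"
proof -
  have "frobenius_inner n Y L = (\<Sum>i<n. \<Sum>j<n. \<Sum>k<n. y k i * L $$ (i, j) * y k j)"
    unfolding frobenius_inner_def using assms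
    by (intro sum.cong refl) (simp add: sum_distrib_left sum_distrib_right mult_ac)
  also have "\<dots> = (\<Sum>i<n. \<Sum>k<n. \<Sum>j<n. y k i * L $$ (i, j) * y k j)"
    by (rule sum.cong[OF refl], rule sum.swap)
  also have "\<dots> = (\<Sum>k<n. \<Sum>i<n. \<Sum>j<n. y k i * L $$ (i, j) * y k j)"
    by (rule sum.swap)
  finally show ?thesis unfolding quad_form_def .
qed

lemma frobenius_inner_psd_nonneg:
  assumes "psd n Y" "psd n L"
  shows "0 \<le> frobenius_inner n Y L"
proof -
  obtain y where y: "\<And>i j. i < n \<Longrightarrow> j < n \<Longrightarrow> Y $$ (i, j) = (\<Sum>k<n. y k i * y k j)"
    using psd_fun_gram[OF psd_imp_psd_fun[OF assms(1)]] by blast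
  have "0 \<le> quad_form n (\<lambda>i j. L $$ (i, j)) x" for x
    using psd_imp_psd_fun[OF assms(2)] unfolding psd_fun_def by blast
  moreover have "frobenius_inner n Y L = (\<Sum>k<n. quad_form n (\<lambda>i j. L $$ (i, j)) (y k))"
    by (rule frobenius_inner_gram) (rule y)
  ultimately show ?thesis by (simp add: sum_nonneg)
qed

lemma frobenius_inner_psd_eq_0:
  assumes Y: "psd n Y" and L: "psd n L" and "frobenius_inner n Y L = 0"
  shows "L * Y = 0\<^sub>m n n"
proof -
  obtain y where y: "\<And>i j. i < n \<Longrightarrow> j < n \<Longrightarrow> Y $$ (i, j) = (\<Sum>k<n. y k i * y k j)"
    using psd_fun_gram[OF psd_imp_psd_fun[OF Y]] by blast
  have Lq: "psd_fun n (\<lambda>i j. L $$ (i, j))" using psd_imp_psd_fun[OF L] .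
  have "frobenius_inner n Y L = (\<Sum>k<n. quad_form n (\<lambda>i j. L $$ (i, j)) (y k))"
    by (rule frobenius_inner_gram) (rule y)
  then have "\<forall>k\<in>{..<n}. quad_form n (\<lambda>i j. L $$ (i, j)) (y k) = 0"
    using assms(3) Lq unfolding psd_fun_def by (subst sum_nonneg_eq_0_iff[symmetric]) auto
  then have Ly: "(\<Sum>j<n. L $$ (i, j) * y k j) = 0" if "i < n" "k < n" for i k
    using psd_fun_null[OF Lq _ that(1)] that(2) by blast
  have "(L * Y) $$ (i, l) = 0" if "i < n" "l < n" for i l
  proof -
    have "(L * Y) $$ (i, l) = (\<Sum>j<n. L $$ (i, j) * Y $$ (j, l))"
      using that Y L unfolding psd_def by (auto intro: mult_mat_index_sum)
    also have "\<dots> = (\<Sum>j<n. \<Sum>k<n. L $$ (i, j) * y k j * y k l)"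
      using that by (intro sum.cong refl) (simp add: y sum_distrib_left mult.assoc)
    also have "\<dots> = (\<Sum>k<n. (\<Sum>j<n. L $$ (i, j) * y k j) * y k l)"
      by (subst sum.swap) (simp add: sum_distrib_right)
    finally show ?thesis using Ly[OF that(1)] by simp
  qed
  then show ?thesis using Y L unfolding psd_def by (intro eq_matI) auto
qed

lemma frobenius_inner_eq_0_if_mult_eq_0:
  assumes Y: "(Y :: real mat) \<in> carrier_mat n n" and L: "L \<in> carrier_mat n n"
    and "transpose_mat L = L" and "Y * L = 0\<^sub>m n n"
  shows "frobenius_inner n Y L = 0"
proof -
  have "L $$ (i, j) = L $$ (j, i)" if "i < n" "j < n" for i j
    using symmetric_mat_entry[OF assms(3) L that] .
  then have "(Y * L) $$ (i, i) = (\<Sum>j<n. Y $$ (i, j) * L $$ (i, j))" if "i < n" for i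
    by (subst mult_mat_index_sum[OF Y L that that]) (auto intro!: sum.cong simp: that)
  then have "frobenius_inner n Y L = (\<Sum>i<n. (Y * L) $$ (i, i))"
    unfolding frobenius_inner_def by simp
  then show ?thesis using assms(4) by simp
qed

lemma mult_eq_0_if_col_space_kernel:
  assumes Y: "(Y :: real mat) \<in> carrier_mat n n" and L: "L \<in> carrier_mat n n"
    and ker: "col_space n L \<subseteq> mat_kernel Y"
  shows "Y * L = 0\<^sub>m n n"
proof (rule eq_matI)
  fix i l assume "i < dim_row (0\<^sub>m n n :: real mat)" "l < dim_col (0\<^sub>m n n :: real mat)"
  then have il: "i < n" "l < n" by auto
  have "L *\<^sub>v unit_vec n l \<in> mat_kernel Y" using ker unit_vec_carrier unfolding col_space_def by blast
  then have "(Y *\<^sub>v (L *\<^sub>v unit_vec n l)) $ i = 0" using Y il by (simp add: mat_kernel_def)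
  moreover have "L *\<^sub>v unit_vec n l = col L l" using L il by (intro eq_vecI) auto
  then have "(Y *\<^sub>v (L *\<^sub>v unit_vec n l)) $ i = (Y * L) $$ (i, l)" using Y L il by simp
  ultimately show "(Y * L) $$ (i, l) = 0\<^sub>m n n $$ (i, l)" using il by simp
qed (use Y L in auto)

section \<open>Orthogonal projections\<close>

lemma (in vec_space) orthogonal_family_card_le:
  fixes q :: "nat \<Rightarrow> 'a vec"
  assumes "\<forall>k<m. q k \<in> carrier_vec n" and "\<forall>k<m. q k \<bullet> q k \<noteq> 0"
    and "\<forall>k<m. \<forall>l<m. k \<noteq> l \<longrightarrow> q k \<bullet> q l = 0"
  shows "m \<le> n"
proof -
  let ?S = "q ` {..<m}"
  have inj: "inj_on q {..<m}"
    using assms(2,3) by (intro inj_onI) (metis lessThan_iff)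
  have S: "?S \<subseteq> carrier_vec n" using assms(1) by auto
  have "\<not> lin_dep ?S"
  proof
    assume "lin_dep ?S"
    then obtain A a v where fin: "finite A" and A: "A \<subseteq> ?S"
      and lc: "lincomb a A = 0\<^sub>v n" and v: "v \<in> A" and av: "a v \<noteq> 0"
      unfolding lin_dep_def by auto
    have AC: "A \<subseteq> carrier_vec n" using A S by auto
    have vC: "v \<in> carrier_vec n" using v AC by auto
    have others: "w \<bullet> v = 0" if "w \<in> A - {v}" for w
      using that A v assms(3) by blast
    have "lincomb a A \<bullet> v = (\<Sum>w\<in>A. a w * (w \<bullet> v))"
      unfolding lincomb_def using AC vC
      by (subst finsum_scalar_prod_sum) (auto intro!: sum.cong)
    also have "\<dots> = a v * (v \<bullet> v)"
      using fin v others by (simp add: sum.remove)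
    finally have "a v * (v \<bullet> v) = 0" using lc vC by simp
    moreover have "v \<bullet> v \<noteq> 0" using v A assms(2) by auto
    ultimately show False using av by simp
  qed
  then have "card ?S \<le> dim" by (rule li_le_dim(2)[OF fin_dim S])
  then show ?thesis using card_image[OF inj] dim_is_n by simp
qed

lemma subspace_carrier: "is_subspace n U \<Longrightarrow> U \<subseteq> carrier_vec n"
  unfolding is_subspace_def by auto

lemma subspace_diff_mem:
  assumes "is_subspace n U" "u \<in> U" "v \<in> U"
  shows "u - v \<in> U"
proof -
  have "u - v = u + (-1) \<cdot>\<^sub>v v"
    using assms subspace_carrier[OF assms(1)] by (intro eq_vecI) auto
  then show ?thesis using assms unfolding is_subspace_def by metis
qed

lemma subspace_lincomb_mem:
  fixes m :: nat
  assumes "is_subspace n U" "\<forall>k<m. q k \<in> U"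
  shows "vec n (\<lambda>i. \<Sum>k<m. d k * q k $ i) \<in> U"
  using assms(2)
proof (induction m)
  case 0
  have "vec n (\<lambda>i. \<Sum>k<0. d k * q k $ i) = 0\<^sub>v n" by (intro eq_vecI) auto
  then show ?case using assms(1) unfolding is_subspace_def by simp
next
  case (Suc m)
  have "q m \<in> carrier_vec n" using Suc.prems assms(1) subspace_carrier by blast
  then have "vec n (\<lambda>i. \<Sum>k<Suc m. d k * q k $ i) = vec n (\<lambda>i. \<Sum>k<m. d k * q k $ i) + d m \<cdot>\<^sub>v q m"
    by (intro eq_vecI) auto
  then show ?case using Suc assms(1) unfolding is_subspace_def by simp
qed

lemma maximal_orthogonal_family_exists:
  assumes U: "is_subspace n U"
  obtains G :: nat and q where "\<forall>k<G. q k \<in> U \<and> q k \<bullet> q k \<noteq> (0 :: real)"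
    and "\<forall>k<G. \<forall>l<G. k \<noteq> l \<longrightarrow> q k \<bullet> q l = 0"
    and "\<And>u. u \<in> U \<Longrightarrow> \<forall>k<G. q k \<bullet> u = 0 \<Longrightarrow> u = 0\<^sub>v n"
proof -
  define good where "good (m :: nat) q \<longleftrightarrow> (\<forall>k<m. q k \<in> U \<and> q k \<bullet> q k \<noteq> (0 :: real)) \<and>
      (\<forall>k<m. \<forall>l<m. k \<noteq> l \<longrightarrow> q k \<bullet> q l = 0)" for m q
  have bound: "good m q \<Longrightarrow> m \<le> n" for m q
    using vec_space.orthogonal_family_card_le[of m q n] subspace_carrier[OF U] unfolding good_def by blast
  define G where "G = (GREATEST m. \<exists>q. good m q)"
  have "\<exists>q. good G q" unfolding G_def
    by (rule GreatestI_nat[of _ 0 n]) (use bound in \<open>auto simp: good_def\<close>)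
  then obtain q where q: "good G q" by blast
  have "u = 0\<^sub>v n" if u: "u \<in> U" "\<forall>k<G. q k \<bullet> u = 0" for u
  proof (rule ccontr)
    assume "u \<noteq> 0\<^sub>v n"
    moreover have uC: "u \<in> carrier_vec n" using u subspace_carrier[OF U] by auto
    ultimately have "u \<bullet> u \<noteq> 0" using scalar_prod_self_eq_0 by blast
    moreover have "q k \<bullet> u = u \<bullet> q k" if "k < G" for k
      using q that uC subspace_carrier[OF U] unfolding good_def by (metis comm_scalar_prod subsetD)
    ultimately have "good (Suc G) (q(G := u))"
      using q u unfolding good_def by (auto simp: less_Suc_eq)
    then have "Suc G \<le> G" unfolding G_def by (intro Greatest_le_nat[of _ _ n]) (use bound in auto)
    then show False by simp
  qed
  then show ?thesis using that q unfolding good_def by blast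
qed

definition orth_proj :: "nat \<Rightarrow> real vec set \<Rightarrow> real mat \<Rightarrow> bool" where
  "orth_proj n U Pm \<longleftrightarrow> Pm \<in> carrier_mat n n \<and> (\<forall>x\<in>carrier_vec n. Pm *\<^sub>v x \<in> U) \<and>
     (\<forall>u\<in>U. Pm *\<^sub>v u = u) \<and> (\<forall>x\<in>carrier_vec n. \<forall>u\<in>U. (x - Pm *\<^sub>v x) \<bullet> u = 0)"

lemma scalar_prod_vec_lincomb:
  fixes q :: "nat \<Rightarrow> real vec" and G :: nat
  assumes "w \<in> carrier_vec n" "\<And>k. k < G \<Longrightarrow> q k \<in> carrier_vec n"
  shows "w \<bullet> vec n (\<lambda>i. \<Sum>k<G. d k * q k $ i) = (\<Sum>k<G. d k * (w \<bullet> q k))"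
proof -
  have "w \<bullet> vec n (\<lambda>i. \<Sum>k<G. d k * q k $ i) = (\<Sum>i<n. \<Sum>k<G. d k * (w $ i * q k $ i))"
    by (simp add: scalar_prod_eq_sum[of _ n] sum_distrib_left algebra_simps)
  also have "\<dots> = (\<Sum>k<G. d k * (\<Sum>i<n. w $ i * q k $ i))"
    by (subst sum.swap) (simp add: sum_distrib_left)
  finally show ?thesis using assms(2) by (simp add: scalar_prod_eq_sum[of "q _" n])
qed

definition family_proj :: "nat \<Rightarrow> nat \<Rightarrow> (nat \<Rightarrow> real vec) \<Rightarrow> real mat" where
  "family_proj n G q = mat n n (\<lambda>(i, j). \<Sum>k<G. q k $ i * q k $ j / (q k \<bullet> q k))"

lemma family_proj_mult_vec:
  assumes "x \<in> carrier_vec n"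
  shows "family_proj n G q *\<^sub>v x = vec n (\<lambda>i. \<Sum>k<G. (q k \<bullet> x) / (q k \<bullet> q k) * q k $ i)"
proof (rule eq_vecI)
  fix i assume "i < dim_vec (vec n (\<lambda>i. \<Sum>k<G. (q k \<bullet> x) / (q k \<bullet> q k) * q k $ i))"
  then have i: "i < n" by simp
  have "(family_proj n G q *\<^sub>v x) $ i = (\<Sum>j<n. (\<Sum>k<G. q k $ i * q k $ j / (q k \<bullet> q k)) * x $ j)"
    using i assms unfolding family_proj_def by (subst mult_mat_vec_index[of _ n n]) auto
  also have "\<dots> = (\<Sum>k<G. \<Sum>j<n. q k $ i * q k $ j / (q k \<bullet> q k) * x $ j)"
    by (simp add: sum_distrib_right sum.swap[of _ "{..<n}"])
  also have "\<dots> = (\<Sum>k<G. (q k \<bullet> x) / (q k \<bullet> q k) * q k $ i)"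
    using assms by (intro sum.cong refl)
      (simp add: scalar_prod_eq_sum sum_distrib_left sum_divide_distrib algebra_simps)
  finally show "(family_proj n G q *\<^sub>v x) $ i = vec n (\<lambda>i. \<Sum>k<G. (q k \<bullet> x) / (q k \<bullet> q k) * q k $ i) $ i"
    using i by simp
qed (simp add: family_proj_def)

lemma orth_proj_family_proj:
  fixes G :: nat
  assumes U: "is_subspace n U"
    and q: "\<forall>k<G. q k \<in> U \<and> q k \<bullet> q k \<noteq> 0" "\<forall>k<G. \<forall>l<G. k \<noteq> l \<longrightarrow> q k \<bullet> q l = 0"
    and maximal: "\<And>u. u \<in> U \<Longrightarrow> \<forall>k<G. q k \<bullet> u = 0 \<Longrightarrow> u = 0\<^sub>v n"
  shows "orth_proj n U (family_proj n G q)"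
proof -
  let ?P = "family_proj n G q"
  have qC: "q k \<in> carrier_vec n" if "k < G" for k using q that subspace_carrier[OF U] by blast
  have PC: "?P \<in> carrier_mat n n" by (simp add: family_proj_def)
  then have PxC: "?P *\<^sub>v x \<in> carrier_vec n" if "x \<in> carrier_vec n" for x
    using that by simp
  have PU: "?P *\<^sub>v x \<in> U" if "x \<in> carrier_vec n" for x
    unfolding family_proj_mult_vec[OF that] by (rule subspace_lincomb_mem[OF U]) (use q in auto)
  have residual: "(x - ?P *\<^sub>v x) \<bullet> q l = 0" if x: "x \<in> carrier_vec n" and l: "l < G" for x l
  proof -
    have "(?P *\<^sub>v x) \<bullet> q l = q l \<bullet> (?P *\<^sub>v x)" using PxC[OF x] qC[OF l] by (rule comm_scalar_prod)
    also have "\<dots> = (\<Sum>k<G. (q k \<bullet> x) / (q k \<bullet> q k) * (q l \<bullet> q k))"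
      unfolding family_proj_mult_vec[OF x] by (rule scalar_prod_vec_lincomb) (use qC l in auto)
    also have "\<dots> = (\<Sum>k<G. if k = l then (q l \<bullet> x) / (q l \<bullet> q l) * (q l \<bullet> q l) else 0)"
      using q(2) l by (intro sum.cong refl) auto
    also have "\<dots> = x \<bullet> q l" using l q(1) comm_scalar_prod[OF qC[OF l] x] by simp
    finally show ?thesis using x PxC[OF x] qC[OF l] by (simp add: minus_scalar_prod_distrib[of _ n])
  qed
  have Pid: "?P *\<^sub>v u = u" if u: "u \<in> U" for u
  proof -
    have uC: "u \<in> carrier_vec n" using u subspace_carrier[OF U] by auto
    have "\<forall>k<G. q k \<bullet> (u - ?P *\<^sub>v u) = 0"
    proof (intro allI impI)
      fix k assume k: "k < G"
      have "q k \<bullet> (u - ?P *\<^sub>v u) = (u - ?P *\<^sub>v u) \<bullet> q k"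
        by (rule comm_scalar_prod[OF qC[OF k]]) (use uC PxC[OF uC] in simp)
      then show "q k \<bullet> (u - ?P *\<^sub>v u) = 0" using residual[OF uC k] by simp
    qed
    then have "u - ?P *\<^sub>v u = 0\<^sub>v n" by (rule maximal[OF subspace_diff_mem[OF U u PU[OF uC]]])
    then have "\<forall>i<n. (u - ?P *\<^sub>v u) $ i = 0" by simp
    then show ?thesis using uC PC by (intro eq_vecI) auto
  qed
  have "(x - ?P *\<^sub>v x) \<bullet> u = 0" if x: "x \<in> carrier_vec n" and u: "u \<in> U" for x u
  proof -
    have uC: "u \<in> carrier_vec n" using u subspace_carrier[OF U] by auto
    have "(x - ?P *\<^sub>v x) \<bullet> u = (x - ?P *\<^sub>v x) \<bullet> (?P *\<^sub>v u)" using Pid[OF u] by simp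
    also have "\<dots> = (\<Sum>k<G. (q k \<bullet> u) / (q k \<bullet> q k) * ((x - ?P *\<^sub>v x) \<bullet> q k))"
      unfolding family_proj_mult_vec[OF uC] by (rule scalar_prod_vec_lincomb) (use x PxC[OF x] qC in simp_all)
    finally show ?thesis using residual[OF x] by simp
  qed
  then show ?thesis unfolding orth_proj_def using PC PU Pid by auto
qed

lemma orth_proj_exists:
  assumes "is_subspace n U"
  obtains Pm where "orth_proj n U Pm"
proof -
  obtain G :: nat and q where "\<forall>k<G. q k \<in> U \<and> q k \<bullet> q k \<noteq> 0"
    "\<forall>k<G. \<forall>l<G. k \<noteq> l \<longrightarrow> q k \<bullet> q l = 0" "\<And>u. u \<in> U \<Longrightarrow> \<forall>k<G. q k \<bullet> u = 0 \<Longrightarrow> u = 0\<^sub>v n"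
    using maximal_orthogonal_family_exists[OF assms] by blast
  from orth_proj_family_proj[OF assms this] that show ?thesis by blast
qed

lemma orth_proj_carrier: "orth_proj n U Pm \<Longrightarrow> Pm \<in> carrier_mat n n"
  unfolding orth_proj_def by auto

lemma orth_proj_residual_orth_compl:
  "orth_proj n U Pm \<Longrightarrow> x \<in> carrier_vec n \<Longrightarrow> x - Pm *\<^sub>v x \<in> orth_compl n U"
  unfolding orth_proj_def orth_compl_def by auto

lemma orth_proj_scalar_prod:
  assumes "orth_proj n U Pm" "x \<in> carrier_vec n" "y \<in> carrier_vec n"
  shows "x \<bullet> (Pm *\<^sub>v y) = (Pm *\<^sub>v x) \<bullet> (Pm *\<^sub>v y)"
proof -
  have PC: "Pm \<in> carrier_mat n n" using assms(1) by (rule orth_proj_carrier)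
  have "(x - Pm *\<^sub>v x) \<bullet> (Pm *\<^sub>v y) = 0" using assms unfolding orth_proj_def by auto
  then show ?thesis using PC assms(2,3) by (simp add: minus_scalar_prod_distrib[of _ n])
qed

lemma orth_proj_symmetric:
  assumes "orth_proj n U Pm"
  shows "transpose_mat Pm = Pm"
proof -
  have PC: "Pm \<in> carrier_mat n n" using assms by (rule orth_proj_carrier)
  have "Pm $$ (i, j) = Pm $$ (j, i)" if "i < n" "j < n" for i j
  proof -
    have entry: "unit_vec n k \<bullet> (Pm *\<^sub>v unit_vec n l) = Pm $$ (k, l)" if "k < n" "l < n" for k l
      using PC that by simp
    have "Pm $$ (i, j) = (Pm *\<^sub>v unit_vec n i) \<bullet> (Pm *\<^sub>v unit_vec n j)"
      using orth_proj_scalar_prod[OF assms] entry that by simp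
    also have "\<dots> = (Pm *\<^sub>v unit_vec n j) \<bullet> (Pm *\<^sub>v unit_vec n i)"
      using PC by (simp add: comm_scalar_prod[of _ n])
    also have "\<dots> = Pm $$ (j, i)"
      using orth_proj_scalar_prod[OF assms] entry that by simp
    finally show ?thesis .
  qed
  then show ?thesis using PC by (intro eq_matI) auto
qed

lemma orth_proj_orth_compl:
  assumes "orth_proj n U Pm" "z \<in> orth_compl n U"
  shows "Pm *\<^sub>v z = 0\<^sub>v n"
proof -
  have PC: "Pm \<in> carrier_mat n n" using assms(1) by (rule orth_proj_carrier)
  have zC: "z \<in> carrier_vec n" using assms(2) unfolding orth_compl_def by auto
  have "Pm *\<^sub>v z \<in> U" using assms(1) zC unfolding orth_proj_def by auto
  then have "z \<bullet> (Pm *\<^sub>v z) = 0" using assms(2) unfolding orth_compl_def by auto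
  then have "(Pm *\<^sub>v z) \<bullet> (Pm *\<^sub>v z) = 0" using orth_proj_scalar_prod[OF assms(1) zC zC] by simp
  then show ?thesis using PC zC by (intro scalar_prod_self_eq_0) auto
qed

lemma psd_smult_orth_proj:
  assumes Pm: "orth_proj n U Pm" and "0 \<le> c"
  shows "psd n (c \<cdot>\<^sub>m Pm)"
proof -
  have PC: "Pm \<in> carrier_mat n n" using Pm by (rule orth_proj_carrier)
  have "0 \<le> x \<bullet> ((c \<cdot>\<^sub>m Pm) *\<^sub>v x)" if x: "x \<in> carrier_vec n" for x
  proof -
    have "x \<bullet> ((c \<cdot>\<^sub>m Pm) *\<^sub>v x) = c * ((Pm *\<^sub>v x) \<bullet> (Pm *\<^sub>v x))"
      using PC x orth_proj_scalar_prod[OF Pm x x] by (simp add: smult_mat_mult_mat_vec)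
    then show ?thesis using assms(2) scalar_prod_self_nonneg[of "Pm *\<^sub>v x" n] PC x by simp
  qed
  moreover have "transpose_mat (c \<cdot>\<^sub>m Pm) = c \<cdot>\<^sub>m Pm"
    using symmetric_mat_entry[OF orth_proj_symmetric[OF Pm] PC] PC by (intro eq_matI) auto
  ultimately show ?thesis using PC unfolding psd_def by auto
qed

lemma col_space_smult_orth_proj:
  assumes Pm: "orth_proj n U Pm" and U: "is_subspace n U" and "c \<noteq> 0"
  shows "col_space n (c \<cdot>\<^sub>m Pm) = U"
proof
  have PC: "Pm \<in> carrier_mat n n" using Pm by (rule orth_proj_carrier)
  show "col_space n (c \<cdot>\<^sub>m Pm) \<subseteq> U"
    using Pm U PC unfolding col_space_def orth_proj_def is_subspace_def
    by (auto simp: smult_mat_mult_mat_vec)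
  show "U \<subseteq> col_space n (c \<cdot>\<^sub>m Pm)"
  proof
    fix u assume u: "u \<in> U"
    have uC: "u \<in> carrier_vec n" using u subspace_carrier[OF U] by auto
    have "(1 / c) \<cdot>\<^sub>v u \<in> U" using u U unfolding is_subspace_def by auto
    then have "(c \<cdot>\<^sub>m Pm) *\<^sub>v ((1 / c) \<cdot>\<^sub>v u) = u"
      using Pm PC uC \<open>c \<noteq> 0\<close> unfolding orth_proj_def by (simp add: smult_mat_mult_mat_vec smult_smult_assoc)
    moreover have "(1 / c) \<cdot>\<^sub>v u \<in> carrier_vec n" using uC by simp
    ultimately show "u \<in> col_space n (c \<cdot>\<^sub>m Pm)" unfolding col_space_def by (auto intro!: exI[of _ "(1 / c) \<cdot>\<^sub>v u"])
  qed
qed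

(* Writing x = P x + w with w orthogonal to U, the cross terms are at most S |P x| |w|, and
   c = S\<^sup>2 / \<epsilon> + S + 1 absorbs them by completing the square. *)
lemma psd_smult_orth_proj_add:
  assumes Pm: "orth_proj n U Pm" and D: "D \<in> carrier_mat n n" "transpose_mat D = D"
    and \<epsilon>: "0 < \<epsilon>" and coercive: "\<And>w. w \<in> orth_compl n U \<Longrightarrow> \<epsilon> * (w \<bullet> w) \<le> w \<bullet> (D *\<^sub>v w)"
  shows "\<exists>c>0. psd n (c \<cdot>\<^sub>m Pm + D)"
proof -
  define S where "S = (\<Sum>i<n. \<Sum>j<n. \<bar>D $$ (i, j)\<bar>)"
  define c where "c = S\<^sup>2 / \<epsilon> + S + 1"
  have PC: "Pm \<in> carrier_mat n n" using Pm by (rule orth_proj_carrier)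
  have "S \<ge> 0" unfolding S_def by (simp add: sum_nonneg)
  then have c: "0 < c" unfolding c_def using \<epsilon> by (simp add: add_nonneg_pos)
  have "0 \<le> x \<bullet> ((c \<cdot>\<^sub>m Pm + D) *\<^sub>v x)" if x: "x \<in> carrier_vec n" for x
  proof -
    define u where "u = Pm *\<^sub>v x"
    define w where "w = x - u"
    have uC: "u \<in> carrier_vec n" and wC: "w \<in> carrier_vec n" unfolding u_def w_def using PC x by auto
    have xuw: "x = u + w" unfolding w_def using uC x by (intro eq_vecI) auto
    define a b where "a = sqrt (u \<bullet> u)" and "b = sqrt (w \<bullet> w)"
    have a2: "a\<^sup>2 = u \<bullet> u" and b2: "b\<^sup>2 = w \<bullet> w"
      unfolding a_def b_def using scalar_prod_self_nonneg uC wC by auto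
    have split: "x \<bullet> ((c \<cdot>\<^sub>m Pm + D) *\<^sub>v x) = c * a\<^sup>2 + x \<bullet> (D *\<^sub>v x)"
      using PC D x a2 orth_proj_scalar_prod[OF Pm x x]
      by (simp add: add_mult_distrib_mat_vec[of _ n n] scalar_prod_add_distrib[of _ n]
          smult_mat_mult_mat_vec u_def)
    have "w \<in> orth_compl n U"
      unfolding w_def u_def by (rule orth_proj_residual_orth_compl[OF Pm x])
    then have "\<epsilon> * (w \<bullet> w) - S * (u \<bullet> u) - 2 * S * a * b \<le> (u + w) \<bullet> (D *\<^sub>v (u + w))"
      unfolding a_def b_def by (rule scalar_prod_mult_mat_vec_add_ge[OF D(1) uC wC S_def coercive])
    then have bound: "\<epsilon> * b\<^sup>2 - S * a\<^sup>2 - 2 * S * a * b \<le> x \<bullet> (D *\<^sub>v x)"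
      unfolding a2 b2 xuw[symmetric] .
    have "c * a\<^sup>2 = S\<^sup>2 / \<epsilon> * a\<^sup>2 + S * a\<^sup>2 + a\<^sup>2"
      unfolding c_def by (simp add: algebra_simps)
    then show ?thesis
      using split bound completing_square_nonneg[OF \<epsilon>, of S a b] zero_le_power2[of a] by linarith
  qed
  moreover have "transpose_mat (c \<cdot>\<^sub>m Pm + D) = c \<cdot>\<^sub>m Pm + D"
    using symmetric_mat_entry[OF orth_proj_symmetric[OF Pm] PC] symmetric_mat_entry[OF D(2,1)] D PC
    by (intro eq_matI) auto
  ultimately show ?thesis using c PC D unfolding psd_def by auto
qed

lemma row_space_id_minus_orth_proj:
  assumes "orth_proj n U Pm"
  shows "row_space n (1\<^sub>m n - Pm) = orth_compl n U"
proof -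
  have PC: "Pm \<in> carrier_mat n n" using assms by (rule orth_proj_carrier)
  have V: "(1\<^sub>m n - Pm) *\<^sub>v x = x - Pm *\<^sub>v x" if "x \<in> carrier_vec n" for x
    using minus_mult_distrib_mat_vec[OF one_carrier_mat PC that] that by simp
  have "transpose_mat (1\<^sub>m n - Pm) = 1\<^sub>m n - Pm"
    using transpose_minus[OF one_carrier_mat PC] orth_proj_symmetric[OF assms] by simp
  moreover have "z \<in> row_space n (1\<^sub>m n - Pm)" if "z \<in> orth_compl n U" for z
  proof -
    have zC: "z \<in> carrier_vec n" using that unfolding orth_compl_def by auto
    then have "z = (1\<^sub>m n - Pm) *\<^sub>v z" using V orth_proj_orth_compl[OF assms that] by simp
    then show ?thesis unfolding row_space_def \<open>transpose_mat _ = _\<close> using zC by blast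
  qed
  ultimately show ?thesis
    unfolding row_space_def using V orth_proj_residual_orth_compl[OF assms] by auto
qed

lemma row_space_orth_compl_annihilates:
  assumes V: "V \<in> carrier_mat k n" and rs: "row_space k V = orth_compl n U"
    and u: "u \<in> U" "u \<in> carrier_vec n"
  shows "V *\<^sub>v u = 0\<^sub>v k"
proof (rule eq_vecI)
  fix r assume "r < dim_vec (0\<^sub>v k :: real vec)"
  then have r: "r < k" by simp
  have "transpose_mat V *\<^sub>v unit_vec k r \<in> orth_compl n U"
    unfolding rs[symmetric] row_space_def by auto
  then have "(transpose_mat V *\<^sub>v unit_vec k r) \<bullet> u = 0" using u unfolding orth_compl_def by auto
  then show "(V *\<^sub>v u) $ r = 0\<^sub>v k $ r"
    using transpose_vec_mult_scalar[OF V u(2), of "unit_vec k r"] r V u by simp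
qed (use V in simp)

section \<open>Blocks and the elliptope\<close>

definition same_block :: "nat set set \<Rightarrow> nat \<Rightarrow> nat \<Rightarrow> bool" where
  "same_block P i j \<longleftrightarrow> (\<exists>I\<in>P. i \<in> I \<and> j \<in> I)"

lemma same_block_refl:
  assumes "partition_on {0..<n} P" "i < n"
  shows "same_block P i i"
proof -
  have "i \<in> \<Union>P" using partition_onD1[OF assms(1)] assms(2) by auto
  then show ?thesis unfolding same_block_def by auto
qed

lemma same_block_sym: "same_block P i j \<Longrightarrow> same_block P j i"
  unfolding same_block_def by auto

lemma same_block_trans:
  assumes "partition_on A P" "same_block P i j" "same_block P j l"
  shows "same_block P i l"
proof -
  obtain I J where "I \<in> P" "i \<in> I" "j \<in> I" "J \<in> P" "j \<in> J" "l \<in> J"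
    using assms(2,3) unfolding same_block_def by blast
  moreover from this have "I = J" using disjointD[OF partition_onD2[OF assms(1)]] by blast
  ultimately show ?thesis unfolding same_block_def by blast
qed

lemma same_block_less:
  assumes "partition_on {0..<n} P" "same_block P i j"
  shows "i < n \<and> j < n"
proof -
  have "i \<in> \<Union>P" "j \<in> \<Union>P" using assms(2) unfolding same_block_def by auto
  then show ?thesis unfolding partition_onD1[OF assms(1), symmetric] by simp
qed

lemma partition_block_subset: "partition_on {0..<n} P \<Longrightarrow> I \<in> P \<Longrightarrow> I \<subseteq> {..<n}"
  using partition_onD1[of "{0..<n}" P] by auto

lemma block_diag_iff:
  "block_diag n P B \<longleftrightarrow> B \<in> carrier_mat n n \<and> (\<forall>i<n. \<forall>j<n. \<not> same_block P i j \<longrightarrow> B $$ (i, j) = 0)"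
  unfolding block_diag_def same_block_def ..

lemma elliptope_entry:
  "Y \<in> elliptope n P \<Longrightarrow> same_block P i j \<Longrightarrow> Y $$ (i, j) = (if i = j then 1 else 0)"
  unfolding elliptope_def same_block_def by auto

lemma elliptope_sphere_quad:
  assumes P: "partition_on {0..<n} P" and Y: "Y \<in> elliptope n P"
    and I: "I \<in> P" and x: "x \<in> sphere_on n I"
  shows "x \<bullet> (Y *\<^sub>v x) = 1"
proof -
  have YC: "Y \<in> carrier_mat n n" using Y unfolding elliptope_def psd_def by auto
  have block: "I \<subseteq> {..<n}" using partition_block_subset[OF P I] .
  have "x \<bullet> (Y *\<^sub>v x) = (\<Sum>i\<in>I. \<Sum>j\<in>I. x $ i * Y $$ (i, j) * x $ j)"
    using x block YC unfolding sphere_on_def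
    by (subst scalar_prod_mult_mat_vec_eq_quad_form[of _ n]) (auto intro: quad_form_support)
  also have "\<dots> = (\<Sum>i\<in>I. \<Sum>j\<in>I. if j = i then x $ i * x $ i else 0)"
    using Y I unfolding elliptope_def by (intro sum.cong refl) auto
  also have "\<dots> = (\<Sum>i<n. x $ i * x $ i)"
    using block x finite_subset[OF block] unfolding sphere_on_def
    by (simp, intro sum.mono_neutral_left) auto
  also have "\<dots> = 1" using x unfolding sphere_on_def by (simp add: scalar_prod_eq_sum[symmetric])
  finally show ?thesis .
qed

lemma sphere_quad_two_point:
  assumes P: "partition_on {0..<n} P" and YC: "Y \<in> carrier_mat n n"
    and sphere: "\<forall>I\<in>P. \<forall>x\<in>sphere_on n I. x \<bullet> (Y *\<^sub>v x) = 1"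
    and "I \<in> P" "i \<in> I" "j \<in> I" "\<alpha> * \<alpha> + (if j = i then 0 else \<beta> * \<beta>) = 1"
  shows "quad_form n (\<lambda>i j. Y $$ (i, j)) (\<lambda>k. if k = i then \<alpha> else if k = j then \<beta> else 0) = 1"
proof -
  let ?f = "\<lambda>k. if k = i then \<alpha> else if k = j then \<beta> else 0"
  let ?x = "vec n ?f"
  have ij: "i < n" "j < n" using partition_block_subset[OF P] assms(4-6) by auto
  have "?x \<bullet> ?x = (\<Sum>k<n. ?f k * ?f k)" by (auto simp: scalar_prod_eq_sum[of _ n] intro!: sum.cong)
  also have "\<dots> = (\<Sum>k\<in>{i, j}. ?f k * ?f k)" by (rule sum.mono_neutral_right) (use ij in auto)
  also have "\<dots> = 1" using assms(7) by (cases "i = j") auto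
  finally have "?x \<in> sphere_on n I" using assms(5,6) unfolding sphere_on_def by auto
  then have "?x \<bullet> (Y *\<^sub>v ?x) = 1" using sphere assms(4) by blast
  moreover have "quad_form n (\<lambda>i j. Y $$ (i, j)) (\<lambda>k. ?x $ k) = quad_form n (\<lambda>i j. Y $$ (i, j)) ?f"
    by (rule quad_form_cong) simp
  ultimately show ?thesis using YC by (simp add: scalar_prod_mult_mat_vec_eq_quad_form[of _ n])
qed

lemma elliptope_if_sphere_quad:
  assumes P: "partition_on {0..<n} P" and Y: "psd n Y"
    and sphere: "\<forall>I\<in>P. \<forall>x\<in>sphere_on n I. x \<bullet> (Y *\<^sub>v x) = 1"
  shows "Y \<in> elliptope n P"
proof -
  have YC: "Y \<in> carrier_mat n n" using Y unfolding psd_def by auto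
  note two_point = sphere_quad_two_point[OF P YC sphere]
  have diag: "Y $$ (i, i) = 1" if "I \<in> P" "i \<in> I" for I i
  proof -
    have "quad_form n (\<lambda>i j. Y $$ (i, j)) (\<lambda>k. if k = i then 1 else if k = i then 0 else 0)
        = quad_form n (\<lambda>i j. Y $$ (i, j)) (\<lambda>k. if k = i then 1 else 0)"
      by (rule quad_form_cong) simp
    then have "quad_form n (\<lambda>i j. Y $$ (i, j)) (\<lambda>k. if k = i then 1 else 0) = 1"
      using two_point[of I i i 1 0] that by simp
    moreover have "i < n" using that partition_block_subset[OF P] by auto
    ultimately show ?thesis using quad_form_single[of i n _ 1] by simp
  qed
  have "Y $$ (i, j) = 0" if "I \<in> P" "i \<in> I" "j \<in> I" "i \<noteq> j" for I i j
  proof -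
    define c :: real where "c = sqrt (1 / 2)"
    have cc: "c * c = 1 / 2" unfolding c_def by simp
    have ij: "i < n" "j < n" using that partition_block_subset[OF P] by auto
    have "c * c + (if j = i then 0 else c * c) = 1" using cc that(4) by simp
    from two_point[OF that(1-3) this]
    have "c * c * Y $$ (i, i) + c * c * Y $$ (i, j) + c * c * Y $$ (j, i) + c * c * Y $$ (j, j) = 1"
      unfolding quad_form_pair[OF ij that(4)] .
    then show ?thesis using diag[OF that(1,2)] diag[OF that(1,3)] psd_entry_sym[OF Y ij] cc by simp
  qed
  then show ?thesis using Y diag unfolding elliptope_def by auto
qed

section \<open>Realizability and ellipsoid fitting\<close>

lemma realizable_imp_ellipsoid_fitting:
  assumes P: "partition_on {0..<n} P" and U: "is_subspace n U" and "realizable n P U"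
  shows "ellipsoid_fitting n P (orth_compl n U)"
proof -
  obtain Y where Y: "Y \<in> elliptope n P" and ker: "U \<subseteq> mat_kernel Y"
    using assms(3) unfolding realizable_def by auto
  have psdY: "psd n Y" using Y unfolding elliptope_def by auto
  then have YC: "Y \<in> carrier_mat n n" unfolding psd_def by auto
  obtain Pm where Pm: "orth_proj n U Pm" using orth_proj_exists[OF U] by blast
  have PC: "Pm \<in> carrier_mat n n" using Pm by (rule orth_proj_carrier)
  have "((1\<^sub>m n - Pm) *\<^sub>v x) \<bullet> (Y *\<^sub>v ((1\<^sub>m n - Pm) *\<^sub>v x)) = 1"
    if "I \<in> P" "x \<in> sphere_on n I" for I x
  proof -
    have xC: "x \<in> carrier_vec n" using that unfolding sphere_on_def by auto
    have "Pm *\<^sub>v x \<in> mat_kernel Y" using Pm xC ker unfolding orth_proj_def by auto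
    then have "Y *\<^sub>v (Pm *\<^sub>v x) = 0\<^sub>v n" using YC by (simp add: mat_kernel_def)
    then have "(x - Pm *\<^sub>v x) \<bullet> (Y *\<^sub>v (x - Pm *\<^sub>v x)) = x \<bullet> (Y *\<^sub>v x)"
      using psdY PC xC unfolding psd_def by (intro scalar_prod_mult_mat_vec_minus_kernel[of _ n]) auto
    moreover have "(1\<^sub>m n - Pm) *\<^sub>v x = x - Pm *\<^sub>v x"
      using minus_mult_distrib_mat_vec[OF one_carrier_mat PC xC] xC by simp
    moreover have "x \<bullet> (Y *\<^sub>v x) = 1" using elliptope_sphere_quad[OF P Y that] .
    ultimately show ?thesis by simp
  qed
  moreover have "1\<^sub>m n - Pm \<in> carrier_mat n n" using PC by (rule minus_carrier_mat)
  ultimately show ?thesis unfolding ellipsoid_fitting_def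
    using row_space_id_minus_orth_proj[OF Pm] psdY by (intro exI[of _ n] exI[of _ "1\<^sub>m n - Pm"] exI[of _ Y]) auto
qed

lemma ellipsoid_fitting_imp_realizable:
  assumes P: "partition_on {0..<n} P" and U: "is_subspace n U"
    and "ellipsoid_fitting n P (orth_compl n U)"
  shows "realizable n P U"
proof -
  obtain k V M where V: "V \<in> carrier_mat k n" and rs: "row_space k V = orth_compl n U"
    and M: "psd k M" and fit: "\<forall>I\<in>P. \<forall>x\<in>sphere_on n I. (V *\<^sub>v x) \<bullet> (M *\<^sub>v (V *\<^sub>v x)) = 1"
    using assms(3) unfolding ellipsoid_fitting_def by blast
  define Y where "Y = transpose_mat V * M * V"
  have psdY: "psd n Y" unfolding Y_def using M V by (rule psd_congruence)
  have "\<forall>I\<in>P. \<forall>x\<in>sphere_on n I. x \<bullet> (Y *\<^sub>v x) = 1"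
    using fit psd_congruence(2)[OF M V] unfolding Y_def by (auto simp: sphere_on_def)
  then have "Y \<in> elliptope n P" by (rule elliptope_if_sphere_quad[OF P psdY])
  moreover have "U \<subseteq> mat_kernel Y"
  proof
    fix u assume u: "u \<in> U"
    have uC: "u \<in> carrier_vec n" using u subspace_carrier[OF U] by auto
    have MC: "M \<in> carrier_mat k k" using M unfolding psd_def by auto
    have "Y *\<^sub>v u = transpose_mat V *\<^sub>v (M *\<^sub>v (V *\<^sub>v u))"
      unfolding Y_def using MC V uC by (simp add: assoc_mult_mat_vec[of _ n k _ n] assoc_mult_mat_vec[of _ n k _ k])
    also have "\<dots> = 0\<^sub>v n"
      using row_space_orth_compl_annihilates[OF V rs u uC] MC V by (simp add: mult_mat_zero_vec)
    finally show "u \<in> mat_kernel Y" using uC psdY unfolding psd_def by (auto intro: mat_kernelI)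
  qed
  ultimately show ?thesis unfolding realizable_def by blast
qed

section \<open>Realizability implies recoverability\<close>

lemma trace_eq_frobenius_inner_elliptope:
  assumes P: "partition_on {0..<n} P" and Y: "Y \<in> elliptope n P" and D: "block_diag n P D"
  shows "mtrace D = frobenius_inner n Y D"
proof -
  have DC: "D \<in> carrier_mat n n" using D unfolding block_diag_def by auto
  have "Y $$ (i, j) * D $$ (i, j) = (if j = i then D $$ (i, i) else 0)" if "i < n" "j < n" for i j
    using elliptope_entry[OF Y] D that unfolding block_diag_iff by (cases "same_block P i j") auto
  then have "frobenius_inner n Y D = (\<Sum>i<n. \<Sum>j<n. if j = i then D $$ (i, i) else 0)"
    unfolding frobenius_inner_def by (intro sum.cong refl) auto
  then have "frobenius_inner n Y D = (\<Sum>i<n. D $$ (i, i))" by simp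
  then show ?thesis using DC unfolding mtrace_def by (simp add: atLeast0LessThan)
qed

lemma block_diag_mult_elliptope_eq_0:
  assumes P: "partition_on {0..<n} P" and Y: "Y \<in> elliptope n P" and D: "block_diag n P D"
    and DY: "D * Y = 0\<^sub>m n n"
  shows "D = 0\<^sub>m n n"
proof (rule eq_matI)
  have DC: "D \<in> carrier_mat n n" using D unfolding block_diag_def by auto
  have YC: "Y \<in> carrier_mat n n" using Y unfolding elliptope_def psd_def by auto
  fix i l assume "i < dim_row (0\<^sub>m n n :: real mat)" "l < dim_col (0\<^sub>m n n :: real mat)"
  then have il: "i < n" "l < n" by auto
  show "D $$ (i, l) = 0\<^sub>m n n $$ (i, l)"
  proof (cases "same_block P i l")
    case True
    have "D $$ (i, j) * Y $$ (j, l) = (if j = l then D $$ (i, l) else 0)" if "j < n" for j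
      using D elliptope_entry[OF Y] same_block_trans[OF P _ True, of j] same_block_sym il that
      unfolding block_diag_iff by (cases "same_block P i j") auto
    then have "(D * Y) $$ (i, l) = (\<Sum>j<n. if j = l then D $$ (i, l) else 0)"
      by (subst mult_mat_index_sum[OF DC YC il]) (auto intro!: sum.cong)
    then have "(D * Y) $$ (i, l) = D $$ (i, l)" using il by simp
    then show ?thesis using DY il by simp
  qed (use D il in \<open>auto simp: block_diag_iff\<close>)
qed (use assms in \<open>auto simp: block_diag_def\<close>)

lemma mtrace_min_of_elliptope_dual:
  assumes P: "partition_on {0..<n} P" and Y: "Y \<in> elliptope n P" and L: "psd n L" and L': "psd n L'"
    and YL: "Y * L = 0\<^sub>m n n" and D: "block_diag n P (L' - L)"
  shows "mtrace L \<le> mtrace L'" and "mtrace L' = mtrace L \<Longrightarrow> L' = L"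
proof -
  have psdY: "psd n Y" using Y unfolding elliptope_def by auto
  have YC: "Y \<in> carrier_mat n n" and LC: "L \<in> carrier_mat n n" and L'C: "L' \<in> carrier_mat n n"
    using psdY L L' unfolding psd_def by auto
  have gap: "mtrace L' - mtrace L = frobenius_inner n Y L'"
    using trace_eq_frobenius_inner_elliptope[OF P Y D] frobenius_inner_eq_0_if_mult_eq_0[OF YC LC _ YL]
      mtrace_minus[OF L'C LC] frobenius_inner_minus[OF LC] L unfolding psd_def by simp
  then show "mtrace L \<le> mtrace L'" using frobenius_inner_psd_nonneg[OF psdY L'] by simp
  assume "mtrace L' = mtrace L"
  then have "L' * Y = 0\<^sub>m n n" using gap frobenius_inner_psd_eq_0[OF psdY L'] by simp
  moreover have "L * Y = 0\<^sub>m n n"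
    using transpose_mult[OF YC LC] YL psdY L unfolding psd_def by simp
  ultimately have "(L' - L) * Y = 0\<^sub>m n n" using L'C LC YC by (simp add: minus_mult_distrib_mat)
  then have "L' - L = 0\<^sub>m n n" using block_diag_mult_elliptope_eq_0[OF P Y D] by simp
  then have "(L' - L) $$ (i, j) = 0" if "i < n" "j < n" for i j using that by simp
  then show "L' = L" using L'C LC by (intro eq_matI) auto
qed

lemma realizable_imp_recoverable:
  assumes P: "partition_on {0..<n} P" and "realizable n P U"
  shows "recoverable n P U"
  unfolding recoverable_def
proof (intro allI impI)
  fix B L assume B: "block_diag n P B" and L: "psd n L" and "col_space n L = U"
  obtain Y where Y: "Y \<in> elliptope n P" and "U \<subseteq> mat_kernel Y"
    using assms(2) unfolding realizable_def by auto
  have YC: "Y \<in> carrier_mat n n" and LC: "L \<in> carrier_mat n n" and BC: "B \<in> carrier_mat n n"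
    using Y L B unfolding elliptope_def psd_def block_diag_def by auto
  have YL: "Y * L = 0\<^sub>m n n"
    using YC LC \<open>U \<subseteq> _\<close> \<open>col_space n L = U\<close> by (intro mult_eq_0_if_col_space_kernel) auto
  show "bmtfa_unique_opt n P (B + L) B L"
    unfolding bmtfa_unique_opt_def bmtfa_feasible_def
  proof (intro conjI allI impI)
    fix B' L' assume "B + L = B' + L' \<and> psd n L' \<and> block_diag n P B'" and neq: "(B', L') \<noteq> (B, L)"
    then have eq: "B + L = B' + L'" and L': "psd n L'" and B': "block_diag n P B'" by auto
    have L'C: "L' \<in> carrier_mat n n" and B'C: "B' \<in> carrier_mat n n"
      using L' B' unfolding psd_def block_diag_def by auto
    have entries: "L' $$ (i, j) - L $$ (i, j) = B $$ (i, j) - B' $$ (i, j)" if "i < n" "j < n" for i j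
      using arg_cong[OF eq, of "\<lambda>M. M $$ (i, j)"] that BC LC B'C L'C by simp
    have D: "block_diag n P (L' - L)"
      using B B' entries LC unfolding block_diag_def by (auto intro: minus_carrier_mat)
    have "L' \<noteq> L"
    proof
      assume "L' = L"
      then have "B' = B" using entries B'C BC by (intro eq_matI) auto
      then show False using neq \<open>L' = L\<close> by simp
    qed
    then show "mtrace L < mtrace L'"
      using mtrace_min_of_elliptope_dual[OF P Y L L' YL D] by fastforce
  qed (use B L in auto)
qed

section \<open>Recoverability implies realizability\<close>

definition nonrecovery_certificate :: "nat \<Rightarrow> nat set set \<Rightarrow> real vec set \<Rightarrow> real mat \<Rightarrow> bool" where
  "nonrecovery_certificate n P U D \<longleftrightarrow> block_diag n P D \<and> transpose_mat D = D \<and> mtrace D < 0 \<and>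
     (\<exists>\<epsilon>>0. \<forall>w\<in>orth_compl n U. \<epsilon> * (w \<bullet> w) \<le> w \<bullet> (D *\<^sub>v w))"

lemma not_recoverable_if_certificate:
  assumes U: "is_subspace n U" and cert: "nonrecovery_certificate n P U D"
  shows "\<not> recoverable n P U"
proof
  assume rec: "recoverable n P U"
  obtain \<epsilon> where \<epsilon>: "0 < \<epsilon>" and coercive: "\<forall>w\<in>orth_compl n U. \<epsilon> * (w \<bullet> w) \<le> w \<bullet> (D *\<^sub>v w)"
    using cert unfolding nonrecovery_certificate_def by blast
  have D: "block_diag n P D" "transpose_mat D = D" "mtrace D < 0"
    using cert unfolding nonrecovery_certificate_def by auto
  have DC: "D \<in> carrier_mat n n" using D(1) unfolding block_diag_def by auto
  obtain Pm where Pm: "orth_proj n U Pm" using orth_proj_exists[OF U] by blast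
  have PC: "Pm \<in> carrier_mat n n" using Pm by (rule orth_proj_carrier)
  obtain c where c: "0 < c" and psdLD: "psd n (c \<cdot>\<^sub>m Pm + D)"
    using psd_smult_orth_proj_add[OF Pm DC D(2) \<epsilon>] coercive by blast
  define L where "L = c \<cdot>\<^sub>m Pm"
  have LC: "L \<in> carrier_mat n n" unfolding L_def using PC by simp
  have "block_diag n P (0\<^sub>m n n)" unfolding block_diag_def by simp
  then have opt: "bmtfa_unique_opt n P (0\<^sub>m n n + L) (0\<^sub>m n n) L"
    using rec psd_smult_orth_proj[OF Pm] col_space_smult_orth_proj[OF Pm U] c
    unfolding recoverable_def L_def by simp
  have "bmtfa_feasible n P (0\<^sub>m n n + L) (0\<^sub>m n n - D) (L + D)"
    unfolding bmtfa_feasible_def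
  proof (intro conjI)
    show "0\<^sub>m n n + L = 0\<^sub>m n n - D + (L + D)" using LC DC by (intro eq_matI) auto
    show "psd n (L + D)" using psdLD unfolding L_def .
    show "block_diag n P (0\<^sub>m n n - D)" using D(1) unfolding block_diag_def by auto
  qed
  moreover have "mtrace (L + D) < mtrace L"
    using LC DC D(3) unfolding mtrace_def by (simp add: sum.distrib)
  ultimately show False using opt unfolding bmtfa_unique_opt_def by fastforce
qed

definition psd_annihilators :: "nat \<Rightarrow> real vec set \<Rightarrow> real \<Rightarrow> (nat \<times> nat \<Rightarrow> real) set" where
  "psd_annihilators n U T = {f. (\<forall>i j. n \<le> i \<or> n \<le> j \<longrightarrow> f (i, j) = 0) \<and> psd_fun n (\<lambda>i j. f (i, j)) \<and>
     (\<forall>u\<in>U. \<forall>i<n. (\<Sum>j<n. f (i, j) * u $ j) = 0) \<and> (\<Sum>i<n. f (i, i)) \<le> T}"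

definition block_dist :: "nat set set \<Rightarrow> nat \<Rightarrow> (nat \<times> nat \<Rightarrow> real) \<Rightarrow> real" where
  "block_dist P n f = (\<Sum>i<n. \<Sum>j<n. of_bool (same_block P i j) * (f (i, j) - of_bool (i = j))\<^sup>2)"

lemma closed_psd_annihilators: "closed (psd_annihilators n U T)"
proof -
  have coord: "continuous_on UNIV (\<lambda>f :: nat \<times> nat \<Rightarrow> real. f p)" for p
    by (rule continuous_on_product_coordinates)
  have "psd_annihilators n U T =
      {f. \<forall>i j. n \<le> i \<or> n \<le> j \<longrightarrow> f (i, j) = 0} \<inter> {f. \<forall>i j. i < n \<longrightarrow> j < n \<longrightarrow> f (i, j) = f (j, i)}
      \<inter> {f. \<forall>x. 0 \<le> quad_form n (\<lambda>i j. f (i, j)) x}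
      \<inter> {f. \<forall>u. u \<in> U \<longrightarrow> (\<forall>i. i < n \<longrightarrow> (\<Sum>j<n. f (i, j) * u $ j) = 0)} \<inter> {f. (\<Sum>i<n. f (i, i)) \<le> T}"
    unfolding psd_annihilators_def psd_fun_def by auto
  also have "closed \<dots>"
    unfolding quad_form_def
    by (intro closed_Int closed_Collect_all closed_Collect_imp closed_Collect_eq closed_Collect_le
        open_Collect_const continuous_intros coord)
  finally show ?thesis .
qed

lemma psd_annihilators_subset_box:
  "psd_annihilators n U T \<subseteq> PiE UNIV (\<lambda>_. {-T..T})"
proof
  fix f assume f: "f \<in> psd_annihilators n U T"
  then have psd: "psd_fun n (\<lambda>i j. f (i, j))" and tr: "(\<Sum>i<n. f (i, i)) \<le> T"
    and out: "\<And>i j. n \<le> i \<or> n \<le> j \<Longrightarrow> f (i, j) = 0"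
    unfolding psd_annihilators_def by auto
  have diag: "0 \<le> f (i, i)" if "i < n" for i using psd_fun_diag_nonneg[OF psd that] by simp
  have diag_le: "f (i, i) \<le> T" if "i < n" for i
    using member_le_sum[of i "{..<n}" "\<lambda>k. f (k, k)"] diag tr that by force
  have "0 \<le> T" using tr sum_nonneg[of "{..<n}" "\<lambda>i. f (i, i)"] diag by force
  have "\<bar>f (i, j)\<bar> \<le> T" for i j
  proof (cases "i < n \<and> j < n")
    case True
    then show ?thesis using psd_fun_abs_le[OF psd, of i j] diag_le[of i] diag_le[of j] by auto
  qed (use out \<open>0 \<le> T\<close> in auto)
  then show "f \<in> PiE UNIV (\<lambda>_. {-T..T})" by (auto simp: PiE_iff abs_le_iff minus_le_iff)
qed

lemma compact_psd_annihilators: "compact (psd_annihilators n U T)"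
proof -
  have "compact (PiE (UNIV :: (nat \<times> nat) set) (\<lambda>_. {-T..T}))"
    using compactin_PiE[of "\<lambda>_. euclidean" UNIV "\<lambda>_. {-T..T}"]
    by (simp add: euclidean_product_topology compactin_subtopology)
  then have "compact (PiE UNIV (\<lambda>_. {-T..T}) \<inter> psd_annihilators n U T)"
    by (rule compact_Int_closed[OF _ closed_psd_annihilators])
  then show ?thesis using psd_annihilators_subset_box by (simp add: Int_absorb1)
qed

lemma block_dist_min_exists:
  assumes "0 \<le> T"
  obtains f0 where "f0 \<in> psd_annihilators n U T"
    and "\<And>f. f \<in> psd_annihilators n U T \<Longrightarrow> block_dist P n f0 \<le> block_dist P n f"
proof -
  have "(\<lambda>_. 0) \<in> psd_annihilators n U T"
    using assms unfolding psd_annihilators_def psd_fun_def quad_form_def by auto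
  moreover have "continuous_on (psd_annihilators n U T) (block_dist P n)"
    unfolding block_dist_def
    by (intro continuous_intros continuous_on_subset[OF continuous_on_product_coordinates]) auto
  ultimately show ?thesis
    using continuous_attains_inf[OF compact_psd_annihilators] that by blast
qed

lemma realizable_if_block_dist_eq_0:
  assumes P: "partition_on {0..<n} P" and U: "is_subspace n U"
    and f: "f \<in> psd_annihilators n U T" and "block_dist P n f = 0"
  shows "realizable n P U"
proof -
  define Y where "Y = mat n n (\<lambda>(i, j). f (i, j))"
  have YC: "Y \<in> carrier_mat n n" unfolding Y_def by simp
  have psd: "psd_fun n (\<lambda>i j. f (i, j))" and ker: "\<And>u i. u \<in> U \<Longrightarrow> i < n \<Longrightarrow> (\<Sum>j<n. f (i, j) * u $ j) = 0"
    using f unfolding psd_annihilators_def by auto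
  have "quad_form n (\<lambda>i j. Y $$ (i, j)) x = quad_form n (\<lambda>i j. f (i, j)) x" for x
    unfolding quad_form_def Y_def by (intro sum.cong refl) auto
  then have "psd_fun n (\<lambda>i j. Y $$ (i, j))" using psd unfolding psd_fun_def Y_def by simp
  then have psdY: "psd n Y" by (rule psd_fun_imp_psd[OF YC])
  have terms: "\<forall>i\<in>{..<n}. \<forall>j\<in>{..<n}. of_bool (same_block P i j) * (f (i, j) - of_bool (i = j))\<^sup>2 = 0"
    using assms(4) unfolding block_dist_def
    by (subst (asm) sum_nonneg_eq_0_iff) (auto simp: sum_nonneg_eq_0_iff sum_nonneg)
  have "Y \<in> elliptope n P" unfolding elliptope_def
  proof (intro CollectI conjI ballI)
    fix I i j assume "I \<in> P" "i \<in> I" "j \<in> I"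
    then have "same_block P i j" unfolding same_block_def by auto
    then show "Y $$ (i, j) = (if i = j then 1 else 0)"
      using terms same_block_less[OF P] unfolding Y_def by fastforce
  qed (fact psdY)
  moreover have "U \<subseteq> mat_kernel Y"
  proof
    fix u assume u: "u \<in> U"
    then have uC: "u \<in> carrier_vec n" using subspace_carrier[OF U] by auto
    have "(Y *\<^sub>v u) $ i = (\<Sum>j<n. f (i, j) * u $ j)" if "i < n" for i
      using that uC unfolding Y_def by (subst mult_mat_vec_index[of _ n n]) auto
    then have "Y *\<^sub>v u = 0\<^sub>v n" using ker[OF u] YC by (intro eq_vecI) auto
    then show "u \<in> mat_kernel Y" using YC uC by (auto intro: mat_kernelI)
  qed
  ultimately show ?thesis unfolding realizable_def by blast
qed

definition block_dist_grad :: "nat set set \<Rightarrow> (nat \<times> nat \<Rightarrow> real) \<Rightarrow> nat \<Rightarrow> nat \<Rightarrow> real" where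
  "block_dist_grad P f i j = of_bool (same_block P i j) * (f (i, j) - of_bool (i = j))"

definition outer_fun :: "nat \<Rightarrow> real vec \<Rightarrow> nat \<times> nat \<Rightarrow> real" where
  "outer_fun n w = (\<lambda>(i, j). if i < n \<and> j < n then w $ i * w $ j else 0)"

lemma block_dist_add_scaled:
  "block_dist P n (\<lambda>q. f q + t * m q) = block_dist P n f
     + 2 * t * (\<Sum>i<n. \<Sum>j<n. block_dist_grad P f i j * m (i, j))
     + t * t * (\<Sum>i<n. \<Sum>j<n. of_bool (same_block P i j) * (m (i, j))\<^sup>2)"
proof -
  have "block_dist P n (\<lambda>q. f q + t * m q) = (\<Sum>i<n. \<Sum>j<n.
      of_bool (same_block P i j) * (f (i, j) - of_bool (i = j))\<^sup>2
      + 2 * t * (block_dist_grad P f i j * m (i, j)) + t * t * (of_bool (same_block P i j) * (m (i, j))\<^sup>2))"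
    unfolding block_dist_def block_dist_grad_def
    by (intro sum.cong refl) (simp add: power2_eq_square algebra_simps)
  also have "\<dots> = block_dist P n f + (\<Sum>i<n. \<Sum>j<n. 2 * t * (block_dist_grad P f i j * m (i, j)))
      + (\<Sum>i<n. \<Sum>j<n. t * t * (of_bool (same_block P i j) * (m (i, j))\<^sup>2))"
    unfolding block_dist_def by (simp only: sum.distrib)
  finally show ?thesis by (simp only: sum_distrib_left)
qed

lemma block_dist_grad_trace:
  "(\<Sum>i<n. block_dist_grad P f i i)
     = (\<Sum>i<n. \<Sum>j<n. block_dist_grad P f i j * f (i, j)) - block_dist P n f"
proof -
  have "(\<Sum>i<n. \<Sum>j<n. block_dist_grad P f i j * f (i, j)) - block_dist P n f
      = (\<Sum>i<n. \<Sum>j<n. block_dist_grad P f i j * of_bool (i = j))"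
    unfolding block_dist_def block_dist_grad_def sum_subtractf[symmetric]
    by (intro sum.cong refl) (simp add: power2_eq_square algebra_simps)
  also have "\<dots> = (\<Sum>i<n. block_dist_grad P f i i)"
    by (simp add: sum.If_cases)
  finally show ?thesis by simp
qed

lemma psd_annihilators_smult:
  assumes "f \<in> psd_annihilators n U T" "0 \<le> s" "s \<le> 1"
  shows "(\<lambda>q. s * f q) \<in> psd_annihilators n U T"
proof -
  have "0 \<le> (\<Sum>i<n. f (i, i))" "(\<Sum>i<n. f (i, i)) \<le> T"
    using assms(1) psd_fun_diag_nonneg unfolding psd_annihilators_def by (auto intro: sum_nonneg)
  then have "s * (\<Sum>i<n. f (i, i)) \<le> T" using assms(2,3) by (meson mult_left_le_one_le order_trans)
  then show ?thesis
    using assms unfolding psd_annihilators_def psd_fun_def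
    by (auto simp: quad_form_def sum_distrib_left[symmetric] mult.assoc mult.left_commute)
qed

lemma psd_annihilators_add_outer:
  assumes U: "U \<subseteq> carrier_vec n" and f: "f \<in> psd_annihilators n U T" and w: "w \<in> orth_compl n U"
    and "0 \<le> t"
    and "(\<Sum>i<n. f (i, i)) + t * (w \<bullet> w) \<le> T'"
  shows "(\<lambda>q. f q + t * outer_fun n w q) \<in> psd_annihilators n U T'"
proof -
  have wC: "w \<in> carrier_vec n" using w unfolding orth_compl_def by auto
  have "quad_form n (\<lambda>i j. outer_fun n w (i, j)) x = (\<Sum>i<n. x i * w $ i)\<^sup>2" for x
    unfolding quad_form_def outer_fun_def power2_eq_square sum_product by (auto intro!: sum.cong)
  then have psd: "psd_fun n (\<lambda>i j. f (i, j) + t * outer_fun n w (i, j))"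
    using f \<open>0 \<le> t\<close> quad_form_linear[of n 1 "\<lambda>i j. f (i, j)" t] unfolding psd_annihilators_def psd_fun_def
    by (auto simp: outer_fun_def mult.commute)
  have "(\<Sum>j<n. outer_fun n w (i, j) * u $ j) = 0" if "i < n" "u \<in> U" for i u
  proof -
    have "(\<Sum>j<n. outer_fun n w (i, j) * u $ j) = w $ i * (\<Sum>j<n. w $ j * u $ j)"
      using that(1) by (auto simp: outer_fun_def sum_distrib_left mult.assoc intro!: sum.cong)
    also have "(\<Sum>j<n. w $ j * u $ j) = w \<bullet> u" using U that(2) by (auto simp: scalar_prod_eq_sum)
    finally show ?thesis using w that(2) unfolding orth_compl_def by simp
  qed
  moreover have "(\<Sum>i<n. outer_fun n w (i, i)) = w \<bullet> w"
    using wC by (simp add: outer_fun_def scalar_prod_eq_sum[of w n])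
  ultimately show ?thesis
    using f psd assms(5) unfolding psd_annihilators_def
    by (auto simp: outer_fun_def algebra_simps sum.distrib sum_distrib_left[symmetric])
qed

(* The trace bound 2n + 1 exceeds the trace bound 2n of any minimiser, so that small rank-one
   perturbations stay feasible. *)
context
  fixes n :: nat and P :: "nat set set" and U :: "real vec set" and f0 :: "nat \<times> nat \<Rightarrow> real"
  assumes P: "partition_on {0..<n} P" and U: "is_subspace n U"
    and f0: "f0 \<in> psd_annihilators n U (2 * real n + 1)"
    and min: "\<And>f. f \<in> psd_annihilators n U (2 * real n + 1) \<Longrightarrow> block_dist P n f0 \<le> block_dist P n f"
begin

lemma block_dist_minimizer_trace_le: "(\<Sum>i<n. f0 (i, i)) \<le> 2 * real n"
proof -
  have "(\<lambda>_. 0) \<in> psd_annihilators n U (2 * real n + 1)"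
    unfolding psd_annihilators_def psd_fun_def quad_form_def by auto
  moreover have "block_dist P n (\<lambda>_. 0) = (\<Sum>i<n. \<Sum>j<n. if j = i then 1 else 0)"
    unfolding block_dist_def using same_block_refl[OF P] by (intro sum.cong refl) auto
  then have "block_dist P n (\<lambda>_. 0) = real n" by simp
  ultimately have "block_dist P n f0 \<le> real n" using min by fastforce
  moreover have "(f0 (i, i) - 1)\<^sup>2 \<le> (\<Sum>j<n. of_bool (same_block P i j) * (f0 (i, j) - of_bool (i = j))\<^sup>2)"
    if "i < n" for i
    using member_le_sum[of i "{..<n}" "\<lambda>j. of_bool (same_block P i j) * (f0 (i, j) - of_bool (i = j))\<^sup>2"]
      same_block_refl[OF P that] that by simp
  then have "(\<Sum>i<n. (f0 (i, i) - 1)\<^sup>2) \<le> block_dist P n f0"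
    unfolding block_dist_def by (intro sum_mono) simp
  moreover have "2 * f0 (i, i) - 3 \<le> (f0 (i, i) - 1)\<^sup>2" for i
    using zero_le_power2[of "f0 (i, i) - 2"] by (simp add: power2_eq_square algebra_simps)
  then have "(\<Sum>i<n. 2 * f0 (i, i) - 3) \<le> (\<Sum>i<n. (f0 (i, i) - 1)\<^sup>2)" by (intro sum_mono)
  ultimately show ?thesis by (simp add: sum_subtractf sum_distrib_left[symmetric])
qed

lemma block_dist_minimizer_directional:
  assumes "0 < \<delta>" and feasible: "\<And>t. 0 < t \<Longrightarrow> t \<le> \<delta> \<Longrightarrow> (\<lambda>q. f0 q + t * m q) \<in> psd_annihilators n U (2 * real n + 1)"
  shows "0 \<le> (\<Sum>i<n. \<Sum>j<n. block_dist_grad P f0 i j * m (i, j))"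
proof (rule quadratic_nonneg_imp_linear_coeff_nonneg[OF _ assms(1)])
  fix t :: real assume "0 < t" "t \<le> \<delta>"
  from min[OF feasible[OF this]] show "0 \<le> 2 * t * (\<Sum>i<n. \<Sum>j<n. block_dist_grad P f0 i j * m (i, j))
      + t * t * (\<Sum>i<n. \<Sum>j<n. of_bool (same_block P i j) * (m (i, j))\<^sup>2)"
    unfolding block_dist_add_scaled by simp
qed

lemma block_dist_minimizer_grad_self: "(\<Sum>i<n. \<Sum>j<n. block_dist_grad P f0 i j * f0 (i, j)) \<le> 0"
proof -
  have "0 \<le> (\<Sum>i<n. \<Sum>j<n. block_dist_grad P f0 i j * - f0 (i, j))"
  proof (rule block_dist_minimizer_directional[of 1])
    fix t :: real assume "0 < t" "t \<le> 1"
    then have "(\<lambda>q. (1 - t) * f0 q) \<in> psd_annihilators n U (2 * real n + 1)"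
      by (intro psd_annihilators_smult[OF f0]) auto
    then show "(\<lambda>q. f0 q + t * - f0 q) \<in> psd_annihilators n U (2 * real n + 1)"
      by (simp add: algebra_simps)
  qed simp
  then show ?thesis by (simp add: sum_negf)
qed

lemma block_dist_minimizer_grad_orth_compl:
  assumes w: "w \<in> orth_compl n U"
  shows "0 \<le> quad_form n (block_dist_grad P f0) (\<lambda>i. w $ i)"
proof -
  have "0 \<le> w \<bullet> w" using w scalar_prod_self_nonneg unfolding orth_compl_def by blast
  have "0 \<le> (\<Sum>i<n. \<Sum>j<n. block_dist_grad P f0 i j * outer_fun n w (i, j))"
  proof (rule block_dist_minimizer_directional[of "1 / (w \<bullet> w + 1)"])
    fix t :: real assume t: "0 < t" "t \<le> 1 / (w \<bullet> w + 1)"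
    then have "t * (w \<bullet> w) \<le> 1"
      using \<open>0 \<le> w \<bullet> w\<close> by (simp add: field_simps)
    then show "(\<lambda>q. f0 q + t * outer_fun n w q) \<in> psd_annihilators n U (2 * real n + 1)"
      using block_dist_minimizer_trace_le t(1) subspace_carrier[OF U]
      by (intro psd_annihilators_add_outer[OF _ f0 w]) auto
  qed (use \<open>0 \<le> w \<bullet> w\<close> in simp)
  then show ?thesis unfolding quad_form_def outer_fun_def by (simp add: mult_ac)
qed

lemma block_dist_minimizer_certificate:
  assumes "0 < block_dist P n f0"
  shows "\<exists>D. nonrecovery_certificate n P U D"
proof -
  let ?R = "block_dist_grad P f0"
  have trace: "(\<Sum>i<n. ?R i i) < 0"
    using block_dist_grad_trace[where f = f0 and n = n and P = P] block_dist_minimizer_grad_self assms by linarith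
  then have "0 < n" by (cases n) auto
  define \<epsilon> where "\<epsilon> = - (\<Sum>i<n. ?R i i) / (2 * real n)"
  have \<epsilon>: "0 < \<epsilon>" unfolding \<epsilon>_def using trace \<open>0 < n\<close> by (simp add: field_simps)
  define D where "D = mat n n (\<lambda>(i, j). ?R i j + \<epsilon> * of_bool (i = j))"
  have DC: "D \<in> carrier_mat n n" unfolding D_def by simp
  have "?R i j = ?R j i" if "i < n" "j < n" for i j
    using f0 that same_block_sym[of P i j] same_block_sym[of P j i]
    unfolding psd_annihilators_def psd_fun_def block_dist_grad_def by auto
  then have "transpose_mat D = D" unfolding D_def by (intro eq_matI) auto
  moreover have "block_diag n P D"
    unfolding block_diag_iff D_def block_dist_grad_def using same_block_refl[OF P] by fastforce
  moreover have "mtrace D = (\<Sum>i<n. ?R i i) + real n * \<epsilon>"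
    unfolding mtrace_def D_def by (simp add: atLeast0LessThan sum.distrib)
  then have "mtrace D < 0" unfolding \<epsilon>_def using trace \<open>0 < n\<close> by simp
  moreover have "\<epsilon> * (w \<bullet> w) \<le> w \<bullet> (D *\<^sub>v w)" if w: "w \<in> orth_compl n U" for w
  proof -
    have wC: "w \<in> carrier_vec n" using w unfolding orth_compl_def by auto
    have "w \<bullet> (D *\<^sub>v w) = quad_form n (\<lambda>i j. D $$ (i, j)) (\<lambda>i. w $ i)"
      by (rule scalar_prod_mult_mat_vec_eq_quad_form[OF DC wC])
    also have "\<dots> = quad_form n (\<lambda>i j. 1 * ?R i j + \<epsilon> * of_bool (i = j)) (\<lambda>i. w $ i)"
      unfolding quad_form_def D_def by (intro sum.cong refl) auto
    also have "quad_form n (\<lambda>i j. of_bool (i = j)) (\<lambda>i. w $ i) = (\<Sum>i<n. \<Sum>j<n. if j = i then w $ i * w $ i else 0)"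
      unfolding quad_form_def by (intro sum.cong refl) auto
    then have "quad_form n (\<lambda>i j. of_bool (i = j)) (\<lambda>i. w $ i) = w \<bullet> w"
      using wC by (simp add: scalar_prod_eq_sum[of _ n])
    then have "quad_form n (\<lambda>i j. 1 * ?R i j + \<epsilon> * of_bool (i = j)) (\<lambda>i. w $ i)
        = quad_form n ?R (\<lambda>i. w $ i) + \<epsilon> * (w \<bullet> w)"
      by (subst quad_form_linear) simp
    finally show ?thesis using block_dist_minimizer_grad_orth_compl[OF w] by simp
  qed
  ultimately show ?thesis unfolding nonrecovery_certificate_def using \<epsilon> by blast
qed

end

lemma recoverable_imp_realizable:
  assumes P: "partition_on {0..<n} P" and U: "is_subspace n U" and "recoverable n P U"
  shows "realizable n P U"
proof -
  obtain f0 where f0: "f0 \<in> psd_annihilators n U (2 * real n + 1)"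
    and min: "\<And>f. f \<in> psd_annihilators n U (2 * real n + 1) \<Longrightarrow> block_dist P n f0 \<le> block_dist P n f"
    using block_dist_min_exists[where T = "2 * real n + 1" and n = n and U = U and P = P] by auto
  show ?thesis
  proof (cases "block_dist P n f0 = 0")
    case True
    then show ?thesis using realizable_if_block_dist_eq_0[OF P U f0] by simp
  next
    case False
    then have "0 < block_dist P n f0" unfolding block_dist_def by (simp add: less_le sum_nonneg)
    then show ?thesis
      using block_dist_minimizer_certificate[OF P U f0 min] not_recoverable_if_certificate[OF U] assms(3)
      by blast
  qed
qed

theorem proposition5p4:
  fixes n :: nat and P :: "nat set set" and U :: "real vec set"
  assumes "partition_on {0..<n} P"
    and "is_subspace n U"
  shows "(recoverable n P U \<longleftrightarrow> realizable n P U) \<and>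
         (realizable n P U \<longleftrightarrow> ellipsoid_fitting n P (orth_compl n U))"
  using recoverable_imp_realizable[OF assms] realizable_imp_recoverable[OF assms(1)]
    realizable_imp_ellipsoid_fitting[OF assms] ellipsoid_fitting_imp_realizable[OF assms]
  by blast

end
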